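(* Let $\tilde L(\lambda)=\lambda^2I+\lambda D+\tilde A\in\mathcal{L}(H_1,H_{-1})$, $\lambda\in\mathbb{C}$. (1) Under the hypotheses of Theorem 1 — (A), (B), and for some $k\in(0,\beta)$, $m\in(0,1]$, $\omega_1=\inf_{x\in H_1,x\ne0}\bigl[\frac1k(D_1x,x)_{-1,1}-\|x\|^2-\frac1{4m}\|(\frac1k\tilde S-D_2)x\|_{-1}^2\bigr]/\|x\|^2\ge0$ — with $\theta=\min\{\omega_1/2,(1-m)/\omega_2\}$, the spectrum of $\tilde L$ satisfies $\sigma(\tilde L)\subseteq\{\lambda\in\mathbb{C}:\mathrm{Re}\,\lambda\le-k\theta\}$. (2) Under the hypotheses of Theorem 2 — (A), (C), and for some $k\in(0,\beta)$, $p,q>0$ with $p+q\le1$, $\omega_1'=a_0(\delta/k-\|\tilde S\|^2/(4pk^2)-\|D_2\|^2/(4q))\ge1$ — with $\theta'=\min\{(\omega_1'-1)/2,(1-p-q)/\omega_2\}$, one has $\sigma(\tilde L)\subseteq\{\lambda\in\mathbb{C}:\mathrm{Re}\,\lambda\le-k\theta'\}$.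
   Context: $H$ is a complex Hilbert space with inner product $(\cdot,\cdot)$ and norm $\|\cdot\|$; $\mathcal{L}(X,Y)$ denotes bounded operators from $X$ to $Y$. Assumption (A): $A:\mathrm{Dom}(A)\subset H\to H$ is m-sectorial (densely defined, numerical range in a sector $\{|\mathrm{Im}\,z|\le\tan(\omega)\,\mathrm{Re}\,z\}$ for some $\omega\in[0,\pi/2)$, no proper sectorial extension), and $\mathrm{Re}(Ax,x)\ge a_0\|x\|^2$ for some $a_0>0$ and all $x\in\mathrm{Dom}(A)$. Then there are a self-adjoint positive definite $T$ (with $T\ge a_0$) and a bounded self-adjoint $S$ on $H$ with $A=T^{1/2}(I+iS)T^{1/2}$. For $s\ge0$, $H_s=\mathrm{Dom}(T^{s/2})$ with norm $\|x\|_s=\|T^{s/2}x\|$; for $s<0$, $H_s$ is the completion of $H$ in $\|x\|_s=\|T^{s/2}x\|$. $(\cdot,\cdot)_{-1,1}$ is the duality pairing on $H_{-1}\times H_1$ extending $(\cdot,\cdot)$. $\tilde A\in\mathcal{L}(H_1,H_{-1})$ is the continuous extension of $A$; $\tilde S=T^{1/2}ST^{1/2}\in\mathcal{L}(H_1,H_{-1})$. Assumption (B): $D\in\mathcal{L}(H_1,H_{-1})$ and $\beta=\inf_{x\in H_1,x\ne0}\mathrm{Re}(Dx,x)_{-1,1}/\|x\|^2>0$. Assumption (C): $D\in\mathcal{L}(H_1,H_{-1})$ and $\delta=\inf_{x\in H_1,x\ne0}\mathrm{Re}(Dx,x)_{-1,1}/\|x\|_1^2>0$ (this implies (B)). Put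 $D'=T^{-1/2}DT^{-1/2}\in\mathcal{L}(H)$, $D_1=\tfrac12T^{1/2}(D'+D'^* )T^{1/2}$, $D_2=\tfrac1{2i}T^{1/2}(D'-D'^* )T^{1/2}$. $\|\tilde S\|$, $\|D_2\|$ are norms in $\mathcal{L}(H_1,H_{-1})$. $\omega_2=\sup_{x\in H_1,x\ne0}[\|x\|_1^2+k(D_1x,x)_{-1,1}+k^2\|x\|^2]/\|x\|_1^2$. The resolvent set of the pencil is $\rho(\tilde L)=\{\lambda\in\mathbb{C}: \tilde L(\lambda)^{-1}\text{ exists in }\mathcal{L}(H_{-1},H_1)\}$ and $\sigma(\tilde L)=\mathbb{C}\setminus\rho(\tilde L)$. *)

theory Defs
  imports "HOL-Analysis.Analysis"
begin

text \<open>HOL has no complex vector spaces; we add complex scalar multiplication and a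
complex inner product (linear in the first argument) on top of a real inner product
space, compatible with the real structure. A complex Hilbert space is a type of class
complex_inner and complete_space.\<close>

class complex_inner = real_inner +
  fixes scaleC :: "complex \<Rightarrow> 'a \<Rightarrow> 'a"
  fixes cinner :: "'a \<Rightarrow> 'a \<Rightarrow> complex"
  assumes scaleC_add_right: "scaleC a (x + y) = scaleC a x + scaleC a y"
    and scaleC_add_left: "scaleC (a + b) x = scaleC a x + scaleC b x"
    and scaleC_scaleC: "scaleC a (scaleC b x) = scaleC (a * b) x"
    and scaleC_one: "scaleC 1 x = x"
    and scaleR_scaleC: "scaleR r x = scaleC (complex_of_real r) x"
    and cinner_add_left: "cinner (x + y) z = cinner x z + cinner y z"
    and cinner_scaleC_left: "cinner (scaleC a x) y = a * cinner x y"
    and cinner_commute: "cinner y x = cnj (cinner x y)"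
    and Re_cinner: "Re (cinner x y) = inner x y"

definition csubspace :: "'a::complex_inner set \<Rightarrow> bool" where
  "csubspace U \<longleftrightarrow> 0 \<in> U \<and> (\<forall>x\<in>U. \<forall>y\<in>U. x + y \<in> U) \<and> (\<forall>c. \<forall>x\<in>U. scaleC c x \<in> U)"

text \<open>A (possibly unbounded) linear operator is a pair (domain, function).\<close>
definition clinear_on :: "'a::complex_inner set \<Rightarrow> ('a \<Rightarrow> 'b::complex_inner) \<Rightarrow> bool" where
  "clinear_on U f \<longleftrightarrow> csubspace U \<and> (\<forall>x\<in>U. \<forall>y\<in>U. f (x + y) = f x + f y)
      \<and> (\<forall>c. \<forall>x\<in>U. f (scaleC c x) = scaleC c (f x))"

definition bounded_clinear_op :: "('a::complex_inner \<Rightarrow> 'a) \<Rightarrow> bool" where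
  "bounded_clinear_op f \<longleftrightarrow> clinear_on UNIV f \<and> (\<exists>K. \<forall>x. norm (f x) \<le> K * norm x)"

definition bounded_selfadjoint :: "('a::complex_inner \<Rightarrow> 'a) \<Rightarrow> bool" where
  "bounded_selfadjoint S \<longleftrightarrow> bounded_clinear_op S \<and> (\<forall>x y. cinner (S x) y = cinner x (S y))"

definition cadj :: "('a::complex_inner \<Rightarrow> 'a) \<Rightarrow> 'a \<Rightarrow> 'a" where
  "cadj f y = (THE z. \<forall>x. cinner (f x) y = cinner x z)"

definition selfadjoint_op :: "'a::complex_inner set \<Rightarrow> ('a \<Rightarrow> 'a) \<Rightarrow> bool" where
  "selfadjoint_op DR R \<longleftrightarrow> clinear_on DR R \<and> closure DR = UNIV
     \<and> (\<forall>x\<in>DR. \<forall>y\<in>DR. cinner (R x) y = cinner x (R y))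
     \<and> (\<forall>y z. (\<forall>x\<in>DR. cinner (R x) y = cinner x z) \<longrightarrow> y \<in> DR)"

definition nonneg_op :: "'a::complex_inner set \<Rightarrow> ('a \<Rightarrow> 'a) \<Rightarrow> bool" where
  "nonneg_op DR R \<longleftrightarrow> (\<forall>x\<in>DR. 0 \<le> Re (cinner (R x) x))"

definition is_op_sqrt :: "'a::complex_inner set \<Rightarrow> ('a \<Rightarrow> 'a) \<Rightarrow> 'a set \<Rightarrow> ('a \<Rightarrow> 'a) \<Rightarrow> bool" where
  "is_op_sqrt DT T DR R \<longleftrightarrow> selfadjoint_op DR R \<and> nonneg_op DR R
     \<and> DT = {x \<in> DR. R x \<in> DR} \<and> (\<forall>x\<in>DT. T x = R (R x))"

definition sectorial_op :: "'a::complex_inner set \<Rightarrow> ('a \<Rightarrow> 'a) \<Rightarrow> real \<Rightarrow> bool" where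
  "sectorial_op DA A \<omega> \<longleftrightarrow> 0 \<le> \<omega> \<and> \<omega> < pi / 2
     \<and> (\<forall>x\<in>DA. \<bar>Im (cinner (A x) x)\<bar> \<le> tan \<omega> * Re (cinner (A x) x))"

definition m_sectorial :: "'a::complex_inner set \<Rightarrow> ('a \<Rightarrow> 'a) \<Rightarrow> bool" where
  "m_sectorial DA A \<longleftrightarrow> clinear_on DA A \<and> closure DA = UNIV \<and> (\<exists>\<omega>. sectorial_op DA A \<omega>)
     \<and> \<not> (\<exists>DB B \<omega>'. DA \<subset> DB \<and> clinear_on DB B \<and> (\<forall>x\<in>DA. B x = A x) \<and> sectorial_op DB B \<omega>')"

text \<open>Model: R = T^(1/2) with domain DR = H_1, norm_1 x = norm (R x).
An element z of H_{-1} is represented by w = T^(-1/2) z in H (the extension of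
T^(-1/2) is a unitary map H_{-1} -> H); thus norm_{-1} z = norm w and
(z, x)_{-1,1} = cinner w (R x).  An operator D in L(H_1,H_{-1}) is represented by
Dr : DR -> H with Dr x = T^(-1/2) (D x); then D' = T^(-1/2) D T^(-1/2) = Dr o R^(-1).\<close>

definition rinv :: "'a set \<Rightarrow> ('a \<Rightarrow> 'a) \<Rightarrow> 'a \<Rightarrow> 'a" where
  "rinv DR R y = (THE x. x \<in> DR \<and> R x = y)"

definition bounded_1_m1 :: "'a::complex_inner set \<Rightarrow> ('a \<Rightarrow> 'a) \<Rightarrow> ('a \<Rightarrow> 'a) \<Rightarrow> bool" where
  "bounded_1_m1 DR R Dr \<longleftrightarrow> clinear_on DR Dr \<and> (\<exists>C. \<forall>x\<in>DR. norm (Dr x) \<le> C * norm (R x))"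

definition Dprime :: "'a set \<Rightarrow> ('a \<Rightarrow> 'a) \<Rightarrow> ('a \<Rightarrow> 'a) \<Rightarrow> 'a \<Rightarrow> 'a" where
  "Dprime DR R Dr y = Dr (rinv DR R y)"

text \<open>Representatives of D_1 x and D_2 x: D_1 x ~ (D'+D'^*)/2 (R x), D_2 x ~ (D'-D'^*)/(2i) (R x).\<close>
definition D1rep :: "'a::complex_inner set \<Rightarrow> ('a \<Rightarrow> 'a) \<Rightarrow> ('a \<Rightarrow> 'a) \<Rightarrow> 'a \<Rightarrow> 'a" where
  "D1rep DR R Dr x = scaleC (1/2) (Dprime DR R Dr (R x) + cadj (Dprime DR R Dr) (R x))"

definition D2rep :: "'a::complex_inner set \<Rightarrow> ('a \<Rightarrow> 'a) \<Rightarrow> ('a \<Rightarrow> 'a) \<Rightarrow> 'a \<Rightarrow> 'a" where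
  "D2rep DR R Dr x = scaleC (1 / (2 * \<i>)) (Dprime DR R Dr (R x) - cadj (Dprime DR R Dr) (R x))"

text \<open>beta = inf Re(Dx,x)_{-1,1} / norm x ^2 (extended real, so that -infinity is possible).\<close>
definition beta_D :: "'a::complex_inner set \<Rightarrow> ('a \<Rightarrow> 'a) \<Rightarrow> ('a \<Rightarrow> 'a) \<Rightarrow> ereal" where
  "beta_D DR R Dr = (INF x\<in>DR - {0}. ereal (Re (cinner (Dr x) (R x)) / (norm x)^2))"

definition delta_D :: "'a::complex_inner set \<Rightarrow> ('a \<Rightarrow> 'a) \<Rightarrow> ('a \<Rightarrow> 'a) \<Rightarrow> ereal" where
  "delta_D DR R Dr = (INF x\<in>DR - {0}. ereal (Re (cinner (Dr x) (R x)) / (norm (R x))^2))"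

definition omega1 :: "'a::complex_inner set \<Rightarrow> ('a \<Rightarrow> 'a) \<Rightarrow> ('a \<Rightarrow> 'a) \<Rightarrow> ('a \<Rightarrow> 'a) \<Rightarrow> real \<Rightarrow> real \<Rightarrow> ereal" where
  "omega1 DR R S Dr k m = (INF x\<in>DR - {0}. ereal
     ((Re (cinner (D1rep DR R Dr x) (R x)) / k - (norm x)^2
        - (norm (scaleC (complex_of_real (1/k)) (S (R x)) - D2rep DR R Dr x))^2 / (4 * m))
      / (norm x)^2))"

definition omega2 :: "'a::complex_inner set \<Rightarrow> ('a \<Rightarrow> 'a) \<Rightarrow> ('a \<Rightarrow> 'a) \<Rightarrow> real \<Rightarrow> real" where
  "omega2 DR R Dr k = Sup {((norm (R x))^2 + k * Re (cinner (D1rep DR R Dr x) (R x)) + k^2 * (norm x)^2)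
                             / (norm (R x))^2 | x. x \<in> DR \<and> x \<noteq> 0}"

text \<open>Norm of S~ = T^(1/2) S T^(1/2) and of D_2 in L(H_1,H_{-1}).\<close>
definition norm_Stilde :: "'a::complex_inner set \<Rightarrow> ('a \<Rightarrow> 'a) \<Rightarrow> ('a \<Rightarrow> 'a) \<Rightarrow> real" where
  "norm_Stilde DR R S = Sup {norm (S (R x)) / norm (R x) | x. x \<in> DR \<and> x \<noteq> 0}"

definition norm_D2 :: "'a::complex_inner set \<Rightarrow> ('a \<Rightarrow> 'a) \<Rightarrow> ('a \<Rightarrow> 'a) \<Rightarrow> real" where
  "norm_D2 DR R Dr = Sup {norm (D2rep DR R Dr x) / norm (R x) | x. x \<in> DR \<and> x \<noteq> 0}"

text \<open>Representative of L~(lambda) x = lambda^2 x + lambda D x + A~ x, for x in H_1: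
the representative of x in H_{-1} is T^(-1/2) x, and A~ x ~ (I + i S) R x.\<close>
definition pencil_rep :: "'a::complex_inner set \<Rightarrow> ('a \<Rightarrow> 'a) \<Rightarrow> ('a \<Rightarrow> 'a) \<Rightarrow> ('a \<Rightarrow> 'a) \<Rightarrow> complex \<Rightarrow> 'a \<Rightarrow> 'a" where
  "pencil_rep DR R S Dr z x = scaleC (z^2) (rinv DR R x) + scaleC z (Dr x) + (R x + scaleC \<i> (S (R x)))"

text \<open>lambda in the resolvent set: L~(lambda) has an inverse in L(H_{-1},H_1).\<close>
definition pencil_resolvent :: "'a::complex_inner set \<Rightarrow> ('a \<Rightarrow> 'a) \<Rightarrow> ('a \<Rightarrow> 'a) \<Rightarrow> ('a \<Rightarrow> 'a) \<Rightarrow> complex set" where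
  "pencil_resolvent DR R S Dr = {z. \<exists>M. (\<forall>w. M w \<in> DR) \<and> clinear_on UNIV M
      \<and> (\<exists>C. \<forall>w. norm (R (M w)) \<le> C * norm w)
      \<and> (\<forall>w. pencil_rep DR R S Dr z (M w) = w)
      \<and> (\<forall>x\<in>DR. M (pencil_rep DR R S Dr z x) = x)}"

definition pencil_spectrum :: "'a::complex_inner set \<Rightarrow> ('a \<Rightarrow> 'a) \<Rightarrow> ('a \<Rightarrow> 'a) \<Rightarrow> ('a \<Rightarrow> 'a) \<Rightarrow> complex set" where
  "pencil_spectrum DR R S Dr = UNIV - pencil_resolvent DR R S Dr"

end

theory Submission
  imports Defs
begin

(* For z in C and k > 0, test L~(z) x against x and rotate by conj (z + k):
     Re (conj (z + k) (L~(z) x, x)_{-1,1})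
       = (Re(Dx,x) - k|x|^2 + Re z |x|^2) (Im z)^2 + Im z ((S~x,x) - k Im(Dx,x)) + C(x),
   where C(x) collects the terms not involving Im z.  The hypotheses of Theorem 1
   (omega1 >= 0) resp. Theorem 2 (omega1' >= 1) absorb the cross term in Im z, and
   omega2 controls C(x); together they show that this rotated form is coercive on H_1
   whenever Re z > -k theta.  A Lax--Milgram argument then produces a bounded inverse
   L~(z)^(-1) in L(H_{-1},H_1), so such z lie in the resolvent set.

   The argument uses A only through A~ = T^(1/2) (I + i S) T^(1/2). *)

section \<open>Complex inner product algebra\<close>

lemma scaleC_zero_left[simp]: "scaleC 0 (x::'a::complex_inner) = 0"
  using scaleR_scaleC[of 0 x] by simp

lemma scaleC_zero_right[simp]: "scaleC a 0 = 0"
  using scaleC_add_right[of a 0 0] by simp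

lemma scaleC_minus_left: "scaleC (-a) x = - scaleC a x"
  using scaleC_add_left[of a "-a" x] by (simp add: add_eq_0_iff)

lemma cinner_zero_left[simp]: "cinner 0 y = 0"
  using cinner_add_left[of 0 0 y] by simp

lemma cinner_add_right: "cinner x (y + z) = cinner x y + cinner x z"
  by (metis cinner_add_left cinner_commute complex_cnj_add)

lemma cinner_scaleC_right: "cinner x (scaleC a y) = cnj a * cinner x y"
  by (metis cinner_commute cinner_scaleC_left complex_cnj_mult)

lemma cinner_zero_right[simp]: "cinner x 0 = 0"
  by (metis cinner_commute cinner_zero_left complex_cnj_zero)

lemma cinner_minus_left: "cinner (- x) y = - cinner x y"
  using cinner_add_left[of x "-x" y] by (simp add: add_eq_0_iff)

lemma cinner_minus_right: "cinner x (- y) = - cinner x y"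
  using cinner_add_right[of x y "-y"] by (simp add: add_eq_0_iff)

lemma cinner_diff_left: "cinner (x - y) z = cinner x z - cinner y z"
  using cinner_add_left[of x "-y" z] cinner_minus_left by simp

lemma cinner_diff_right: "cinner x (y - z) = cinner x y - cinner x z"
  using cinner_add_right[of x y "-z"] cinner_minus_right by simp

lemma Re_cinner_self: "Re (cinner x x) = (norm x)^2"
  by (simp add: Re_cinner power2_norm_eq_inner)

lemma Im_cinner_self[simp]: "Im (cinner x x) = 0"
  using cinner_commute[of x x] by (metis Im_complex_of_real Reals_cnj_iff complex_is_Real_iff)

lemma cinner_self: "cinner x x = complex_of_real ((norm x)^2)"
  by (simp add: complex_eq_iff Re_cinner_self)

lemma norm_scaleC: "norm (scaleC a x) = cmod a * norm x"
proof -
  have "(norm (scaleC a x))^2 = Re (cinner (scaleC a x) (scaleC a x))"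
    by (simp add: Re_cinner_self)
  also have "\<dots> = Re (a * cnj a * cinner x x)"
    by (simp add: cinner_scaleC_left cinner_scaleC_right mult.assoc)
  also have "\<dots> = (cmod a * norm x)^2"
    by (simp add: cinner_self complex_mult_cnj cmod_power2 power_mult_distrib)
  finally show ?thesis by (simp add: power2_eq_iff_nonneg)
qed

text \<open>Cauchy--Schwarz for the complex inner product, reduced to the real one by a
phase rotation.\<close>
lemma cinner_cauchy_schwarz: "cmod (cinner x y) \<le> norm x * norm y"
proof (cases "cinner x y = 0")
  case True then show ?thesis by simp
next
  case False
  define u where "u = cnj (cinner x y) / cmod (cinner x y)"
  have cu: "cmod u = 1" using False by (simp add: u_def norm_divide)
  have "cinner (scaleC u x) y = u * cinner x y" by (simp add: cinner_scaleC_left)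
  also have "\<dots> = complex_of_real (cmod (cinner x y))"
    using False by (simp add: u_def complex_norm_square[symmetric] power2_eq_square field_simps)
  finally have "cmod (cinner x y) = Re (cinner (scaleC u x) y)" by simp
  also have "\<dots> = inner (scaleC u x) y" by (simp add: Re_cinner)
  also have "\<dots> \<le> norm (scaleC u x) * norm y" by (rule norm_cauchy_schwarz)
  also have "\<dots> = norm x * norm y" by (simp add: norm_scaleC cu)
  finally show ?thesis .
qed

lemma Re_cinner_le: "Re (cinner x y) \<le> norm x * norm y"
  using cinner_cauchy_schwarz[of x y] complex_Re_le_cmod[of "cinner x y"] by linarith

lemma bounded_linear_cinner_left: "bounded_linear (\<lambda>x. cinner x a)"
  by (rule bounded_linear_intro[where K="norm a"])
    (auto simp: cinner_add_left scaleR_scaleC cinner_scaleC_left scaleR_conv_of_real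
      cinner_cauchy_schwarz)

lemma bounded_linear_cinner_right: "bounded_linear (\<lambda>x. cinner a x)"
proof (rule bounded_linear_intro[where K="norm a"])
  show "cmod (cinner a x) \<le> norm x * norm a" for x
    using cinner_cauchy_schwarz[of a x] by (simp add: mult.commute)
qed (auto simp: cinner_add_right scaleR_scaleC cinner_scaleC_right scaleR_conv_of_real)

lemma cinner_orth_dense:
  assumes "closure D = UNIV" "\<forall>v\<in>D. cinner v e = 0"
  shows "e = 0"
proof -
  have "closed {v. cinner v e = 0}"
    by (intro closed_Collect_eq continuous_on_const linear_continuous_on bounded_linear_cinner_left)
  then have "closure D \<subseteq> {v. cinner v e = 0}" using assms(2) by (intro closure_minimal) auto
  then have "cinner e e = 0" using assms(1) by auto
  then show ?thesis by (simp add: cinner_self)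
qed

lemma cinner_zero_from_inner:
  assumes "inner v w = 0" "inner (scaleC \<i> v) w = 0"
  shows "cinner v w = 0"
proof -
  have "inner (scaleC \<i> v) w = - Im (cinner v w)"
    by (simp flip: Re_cinner add: cinner_scaleC_left)
  then show ?thesis using assms by (simp add: complex_eq_iff Re_cinner)
qed

section \<open>Linear operators on subspaces\<close>

lemma clin_zero: "clinear_on U f \<Longrightarrow> 0 \<in> U"
  by (simp add: clinear_on_def csubspace_def)
lemma clin_add_mem: "clinear_on U f \<Longrightarrow> x \<in> U \<Longrightarrow> y \<in> U \<Longrightarrow> x + y \<in> U"
  by (simp add: clinear_on_def csubspace_def)
lemma clin_scale_mem: "clinear_on U f \<Longrightarrow> x \<in> U \<Longrightarrow> scaleC c x \<in> U"
  by (simp add: clinear_on_def csubspace_def)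
lemma clin_add: "clinear_on U f \<Longrightarrow> x \<in> U \<Longrightarrow> y \<in> U \<Longrightarrow> f (x + y) = f x + f y"
  by (simp add: clinear_on_def)
lemma clin_scale: "clinear_on U f \<Longrightarrow> x \<in> U \<Longrightarrow> f (scaleC c x) = scaleC c (f x)"
  by (simp add: clinear_on_def)
lemma clin_f0: "clinear_on U f \<Longrightarrow> f 0 = 0"
  using clin_scale[of U f 0 0] clin_zero[of U f] by simp
lemma clin_minus_mem: "clinear_on U f \<Longrightarrow> x \<in> U \<Longrightarrow> - x \<in> U"
  using clin_scale_mem[of U f x "-1"] by (simp add: scaleC_minus_left scaleC_one)
lemma clin_diff_mem: "clinear_on U f \<Longrightarrow> x \<in> U \<Longrightarrow> y \<in> U \<Longrightarrow> x - y \<in> U"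
  using clin_add_mem[of U f x "-y"] clin_minus_mem[of U f y] by simp
lemma clin_minus: "clinear_on U f \<Longrightarrow> x \<in> U \<Longrightarrow> f (- x) = - f x"
  using clin_scale[of U f x "-1"] by (simp add: scaleC_minus_left scaleC_one)
lemma clin_diff: "clinear_on U f \<Longrightarrow> x \<in> U \<Longrightarrow> y \<in> U \<Longrightarrow> f (x - y) = f x - f y"
  using clin_add[of U f x "-y"] clin_minus[of U f y] clin_minus_mem[of U f y] by simp

lemma clinear_on_UNIV_iff:
  "clinear_on UNIV f \<longleftrightarrow> (\<forall>x y. f (x + y) = f x + f y) \<and> (\<forall>c x. f (scaleC c x) = scaleC c (f x))"
  by (simp add: clinear_on_def csubspace_def)

lemma bounded_linear_of_clinear:
  fixes f :: "'a::complex_inner \<Rightarrow> 'b::complex_inner"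
  assumes lin: "clinear_on UNIV f" and bd: "\<And>x. norm (f x) \<le> K * norm x"
  shows "bounded_linear f"
proof (rule bounded_linear_intro[where K=K])
  show "f (x + y) = f x + f y" for x y using lin by (simp add: clinear_on_UNIV_iff)
  show "f (scaleR r x) = scaleR r (f x)" for r x
    using lin by (metis clinear_on_UNIV_iff scaleR_scaleC)
  show "norm (f x) \<le> norm x * K" for x using bd[of x] by (simp add: mult.commute)
qed

section \<open>The projection theorem\<close>

text \<open>In a minimizing sequence for the distance from y to a set closed under midpoints,
the parallelogram law forces the terms to cluster: this is the Cauchy argument of the
projection theorem.\<close>
lemma minimizing_sequence_Cauchy:
  fixes y :: "'a::real_inner"
  assumes dle: "\<And>n m. d \<le> (norm (y - scaleR (1/2) (v n + v m)))^2"
    and vd: "\<And>n. (norm (y - v n))^2 < d + 1 / Suc n"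
  shows "Cauchy v"
proof (rule CauchyI)
  have mid: "(norm (v n - v m))^2 \<le> 2 / Suc n + 2 / Suc m" for n m
  proof -
    have "y - scaleR (1/2) (v n + v m) = scaleR (1/2) ((y - v n) + (y - v m))"
      by (simp add: algebra_simps flip: scaleR_add_left)
    then have h: "4 * d \<le> (norm ((y - v n) + (y - v m)))^2"
      using dle[of n m] by (simp add: power_mult_distrib power2_eq_square)
    have "(norm (v n - v m))^2
        = 2 * (norm (y - v n))^2 + 2 * (norm (y - v m))^2 - (norm ((y - v n) + (y - v m)))^2"
      by (simp add: power2_norm_eq_inner inner_add inner_diff inner_commute)
    then show ?thesis using h vd[of n] vd[of m] by simp
  qed
  fix e :: real assume e: "0 < e"
  obtain M :: nat where M: "4 / e^2 < M" using reals_Archimedean2 by blast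
  have M': "4 / Suc M < e^2"
    using M e by (simp add: field_simps) (smt (verit) zero_less_power)
  show "\<exists>M. \<forall>m\<ge>M. \<forall>n\<ge>M. norm (v m - v n) < e"
  proof (intro exI allI impI)
    fix m n assume mn: "M \<le> m" "M \<le> n"
    have "2 / Suc m \<le> 2 / Suc M" "2 / Suc n \<le> 2 / Suc M"
      using mn by (auto intro!: divide_left_mono)
    then have "(norm (v m - v n))^2 < e^2" using mid[of m n] M' by simp
    then show "norm (v m - v n) < e" using e by (simp add: power_less_imp_less_base)
  qed
qed

lemma closed_subspace_nearest_point:
  fixes V :: "'a::{real_inner, complete_space} set"
  assumes cl: "closed V" and z: "0 \<in> V" and ad: "\<forall>x\<in>V. \<forall>y\<in>V. x + y \<in> V"
    and sc: "\<forall>r. \<forall>x\<in>V. scaleR r x \<in> V"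
  shows "\<exists>p\<in>V. \<forall>v\<in>V. (norm (y - p))^2 \<le> (norm (y - v))^2"
proof -
  define d where "d = (INF v\<in>V. (norm (y - v))^2)"
  have bdd: "bdd_below ((\<lambda>v. (norm (y - v))^2) ` V)" by (rule bdd_belowI[of _ 0]) auto
  have dle: "d \<le> (norm (y - v))^2" if "v \<in> V" for v
    unfolding d_def using bdd that by (rule cINF_lower)
  have "\<exists>v\<in>V. (norm (y - v))^2 < d + 1 / Suc n" for n
  proof -
    have "d < d + 1 / Suc n" by simp
    moreover have "V \<noteq> {}" using z by blast
    ultimately show ?thesis using cINF_less_iff[OF _ bdd] unfolding d_def by blast
  qed
  then obtain v where vV: "\<And>n. v n \<in> V" and vd: "\<And>n. (norm (y - v n))^2 < d + 1 / Suc n"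
    by metis
  have "Cauchy v"
  proof (rule minimizing_sequence_Cauchy[OF _ vd])
    show "d \<le> (norm (y - scaleR (1/2) (v n + v m)))^2" for n m
      using vV ad sc by (intro dle) auto
  qed
  then obtain p where vp: "v \<longlonglongrightarrow> p" using convergent_eq_Cauchy by blast
  have "(\<lambda>n. (norm (y - v n))^2) \<longlonglongrightarrow> (norm (y - p))^2"
    by (intro tendsto_intros vp)
  moreover have "(\<lambda>n. d + 1 / Suc n) \<longlonglongrightarrow> d + 0"
    by (intro tendsto_intros LIMSEQ_inverse_real_of_nat[unfolded inverse_eq_divide])
  ultimately have "(norm (y - p))^2 \<le> d + 0"
    using vd by (intro LIMSEQ_le) (auto intro: less_imp_le)
  then have pd: "(norm (y - p))^2 \<le> d" by simp
  have pV: "p \<in> V" using closed_sequentially[OF cl] vV vp by blast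
  show ?thesis
  proof (intro bexI[OF _ pV] ballI)
    show "(norm (y - p))^2 \<le> (norm (y - v))^2" if "v \<in> V" for v
      using order_trans[OF pd dle[OF that]] .
  qed
qed

text \<open>The error of a nearest point approximation is orthogonal to the subspace:
otherwise moving along the offending direction would decrease the distance.\<close>
lemma nearest_point_orthogonal:
  fixes V :: "'a::real_inner set"
  assumes pV: "p \<in> V" and near: "\<forall>v\<in>V. (norm (y - p))^2 \<le> (norm (y - v))^2"
    and ad: "\<forall>x\<in>V. \<forall>y\<in>V. x + y \<in> V" and sc: "\<forall>r. \<forall>x\<in>V. scaleR r x \<in> V"
    and uV: "u \<in> V"
  shows "inner u (y - p) = 0"
proof -
  define w where "w = y - p"
  have key: "0 \<le> t^2 * (norm u)^2 - 2 * t * inner u w" for t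
  proof -
    have "p + scaleR t u \<in> V" using uV pV ad sc by auto
    then have "(norm w)^2 \<le> (norm (w - scaleR t u))^2" using near by (simp add: w_def diff_diff_eq)
    also have "(norm (w - scaleR t u))^2 = (norm w)^2 - 2 * t * inner u w + t^2 * (norm u)^2"
      by (simp only: power2_norm_eq_inner)
        (simp add: inner_diff inner_commute power2_eq_square algebra_simps)
    finally show ?thesis by simp
  qed
  show ?thesis
  proof (cases "u = 0")
    case True then show ?thesis by simp
  next
    case False
    then have nu: "0 < (norm u)^2" by simp
    have "0 \<le> (inner u w / (norm u)^2)^2 * (norm u)^2 - 2 * (inner u w / (norm u)^2) * inner u w"
      by (rule key)
    also have "\<dots> = - ((inner u w)^2) / (norm u)^2"
      using nu by (simp add: field_simps power2_eq_square)
    finally have "(inner u w)^2 \<le> 0" using nu by (simp add: divide_le_0_iff)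
    then show ?thesis by (simp add: w_def)
  qed
qed

lemma closed_subspace_eq_UNIV:
  fixes V :: "'a::{real_inner, complete_space} set"
  assumes cl: "closed V" and z: "0 \<in> V" and ad: "\<forall>x\<in>V. \<forall>y\<in>V. x + y \<in> V"
    and sc: "\<forall>r. \<forall>x\<in>V. scaleR r x \<in> V"
    and orth: "\<forall>w. (\<forall>v\<in>V. inner v w = 0) \<longrightarrow> w = 0"
  shows "V = UNIV"
proof -
  have "y \<in> V" for y
  proof -
    obtain p where pV: "p \<in> V" and near: "\<forall>v\<in>V. (norm (y - p))^2 \<le> (norm (y - v))^2"
      using closed_subspace_nearest_point[OF cl z ad sc] by blast
    have "y - p = 0" using orth nearest_point_orthogonal[OF pV near ad sc] by blast
    then show ?thesis using pV by simp
  qed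
  then show ?thesis by blast
qed

section \<open>Riesz representation and adjoints\<close>

text \<open>Riesz representation: a bounded complex-linear functional is an inner product
against a fixed vector (take the vector orthogonal to its kernel).\<close>
lemma riesz_representation:
  fixes \<phi> :: "'a::{complex_inner,complete_space} \<Rightarrow> complex"
  assumes add: "\<And>x y. \<phi> (x + y) = \<phi> x + \<phi> y" and hom: "\<And>c x. \<phi> (scaleC c x) = c * \<phi> x"
    and bd: "\<And>x. cmod (\<phi> x) \<le> K * norm x"
  shows "\<exists>z. \<forall>x. \<phi> x = cinner x z"
proof -
  define N where "N = {x. \<phi> x = 0}"
  have blp: "bounded_linear \<phi>"
    by (rule bounded_linear_intro[where K=K])
      (auto simp: add scaleR_scaleC hom scaleR_conv_of_real bd mult.commute)
  have z0: "\<phi> 0 = 0" using hom[of 0 0] by simp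
  show ?thesis
  proof (cases "N = UNIV")
    case True then show ?thesis by (intro exI[of _ 0]) (auto simp: N_def)
  next
    case False
    have cl: "closed N" unfolding N_def
      by (intro closed_Collect_eq continuous_on_const linear_continuous_on blp)
    obtain w where wo: "\<forall>v\<in>N. inner v w = 0" and w0: "w \<noteq> 0"
      using closed_subspace_eq_UNIV[OF cl] z0 add hom False by (auto simp: N_def scaleR_scaleC)
    have co: "cinner v w = 0" if "v \<in> N" for v
      using that wo hom by (intro cinner_zero_from_inner) (auto simp: N_def)
    have pw: "\<phi> w \<noteq> 0"
      using co[of w] w0 by (auto simp: N_def cinner_self)
    have nw: "(norm w)^2 \<noteq> 0" using w0 by simp
    define z where "z = scaleC (cnj (\<phi> w) / complex_of_real ((norm w)^2)) w"
    have "\<phi> x = cinner x z" for x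
    proof -
      define u where "u = x - scaleC (\<phi> x / \<phi> w) w"
      have "\<phi> u = 0"
        using pw by (simp add: u_def diff_conv_add_uminus add hom scaleC_minus_left[symmetric])
      then have "cinner u w = 0" using co by (simp add: N_def)
      then have e: "cinner x w = \<phi> x / \<phi> w * complex_of_real ((norm w)^2)"
        by (simp add: u_def cinner_diff_left cinner_scaleC_left cinner_self)
      have "cinner x z = \<phi> w / complex_of_real ((norm w)^2) * cinner x w"
        by (simp add: z_def cinner_scaleC_right)
      also have "\<dots> = \<phi> x" using e pw nw by (simp add: field_simps)
      finally show ?thesis by simp
    qed
    then show ?thesis by blast
  qed
qed

lemma cadj_prop:
  fixes f :: "'a::{complex_inner,complete_space} \<Rightarrow> 'a"
  assumes lin: "clinear_on UNIV f" and bd: "\<And>x. norm (f x) \<le> K * norm x"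
  shows "cinner (f x) y = cinner x (cadj f y)"
proof -
  have "\<exists>z. \<forall>x. cinner (f x) y = cinner x z"
  proof (rule riesz_representation[where K="K * norm y"])
    show "cinner (f (a + b)) y = cinner (f a) y + cinner (f b) y" for a b
      using lin by (simp add: clinear_on_UNIV_iff cinner_add_left)
    show "cinner (f (scaleC c a)) y = c * cinner (f a) y" for c a
      using lin by (simp add: clinear_on_UNIV_iff cinner_scaleC_left)
    show "cmod (cinner (f a) y) \<le> K * norm y * norm a" for a
      using cinner_cauchy_schwarz[of "f a" y] mult_right_mono[OF bd[of a], of "norm y"]
      by (simp add: ac_simps)
  qed
  moreover have "z1 = z2" if "\<forall>x. cinner x z1 = cinner x z2" for z1 z2
  proof -
    have "cinner (z1 - z2) (z1 - z2) = 0" using that by (simp add: cinner_diff_right)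
    then show ?thesis by (simp add: cinner_self)
  qed
  ultimately have "\<exists>!z. \<forall>x. cinner (f x) y = cinner x z" by metis
  then have "\<forall>x. cinner (f x) y = cinner x (cadj f y)"
    unfolding cadj_def by (rule theI')
  then show ?thesis by blast
qed

lemma cadj_bound:
  fixes f :: "'a::{complex_inner,complete_space} \<Rightarrow> 'a"
  assumes lin: "clinear_on UNIV f" and bd: "\<And>x. norm (f x) \<le> K * norm x" and K: "K \<ge> 0"
  shows "norm (cadj f y) \<le> K * norm y"
proof -
  let ?u = "cadj f y"
  have "(norm ?u)^2 = Re (cinner (f ?u) y)"
    using cadj_prop[OF lin bd] by (simp flip: Re_cinner_self)
  also have "\<dots> \<le> norm (f ?u) * norm y" by (rule Re_cinner_le)
  also have "\<dots> \<le> K * norm ?u * norm y" by (intro mult_right_mono bd) auto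
  finally have "norm ?u * norm ?u \<le> (K * norm y) * norm ?u" by (simp add: power2_eq_square ac_simps)
  then show ?thesis
    by (cases "norm ?u = 0") (auto simp: mult_le_cancel_right K)
qed

section \<open>Closed range and coercive operators\<close>

lemma coercive_bounded_below:
  assumes "c * (norm x)^2 \<le> Re (cinner y x)"
  shows "c * norm x \<le> norm y"
proof (cases "x = 0")
  case False
  have "(c * norm x) * norm x \<le> norm y * norm x"
    using assms Re_cinner_le[of y x] by (simp add: power2_eq_square mult.assoc)
  then show ?thesis using False by simp
qed simp

lemma closed_range_of_bounded_below:
  fixes F :: "'a::{complex_inner,complete_space} \<Rightarrow> 'b::complex_inner"
  assumes lin: "clinear_on D F" and c: "c > 0"
    and below: "\<And>x. x \<in> D \<Longrightarrow> c * norm x \<le> norm (F x)"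
    and graph: "\<And>x p l. (\<And>n. x n \<in> D) \<Longrightarrow> x \<longlonglongrightarrow> p \<Longrightarrow> (\<lambda>n. F (x n)) \<longlonglongrightarrow> l
                 \<Longrightarrow> p \<in> D \<and> F p = l"
  shows "closed (F ` D)"
  unfolding closed_sequential_limits
proof (intro allI impI, elim conjE)
  fix y l assume "\<forall>n. y n \<in> F ` D" and yl: "y \<longlonglongrightarrow> l"
  then have "\<forall>n. \<exists>u. u \<in> D \<and> y n = F u" by auto
  then obtain x where "\<forall>n. x n \<in> D \<and> y n = F (x n)" by (auto dest!: choice)
  then have xD: "\<And>n. x n \<in> D" and xy: "\<And>n. y n = F (x n)" by auto
  have "Cauchy x"
    unfolding Cauchy_iff
  proof (intro allI impI)
    fix e :: real assume "0 < e"
    then obtain M where M: "\<forall>m\<ge>M. \<forall>n\<ge>M. norm (y m - y n) < c * e"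
      using LIMSEQ_imp_Cauchy[OF yl] c unfolding Cauchy_iff by (meson mult_pos_pos)
    show "\<exists>M. \<forall>m\<ge>M. \<forall>n\<ge>M. norm (x m - x n) < e"
    proof (intro exI[of _ M] allI impI)
      fix m n assume "M \<le> m" "M \<le> n"
      then have "norm (F (x m - x n)) < c * e"
        using M clin_diff[OF lin xD xD] xy by simp
      then have "c * norm (x m - x n) < c * e"
        using below[OF clin_diff_mem[OF lin xD[of m] xD[of n]]] by linarith
      then show "norm (x m - x n) < e" using c by simp
    qed
  qed
  then obtain p where "x \<longlonglongrightarrow> p" using convergent_eq_Cauchy by blast
  moreover have "(\<lambda>n. F (x n)) = y" using xy by auto
  then have "(\<lambda>n. F (x n)) \<longlonglongrightarrow> l" using yl by simp
  ultimately have "p \<in> D \<and> F p = l" using graph xD by blast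
  then show "l \<in> F ` D" by blast
qed

lemma range_eq_UNIV_of_closed:
  fixes F :: "'a::complex_inner \<Rightarrow> 'b::{complex_inner,complete_space}"
  assumes lin: "clinear_on D F" and cl: "closed (F ` D)"
    and orth: "\<And>w. (\<And>x. x \<in> D \<Longrightarrow> cinner (F x) w = 0) \<Longrightarrow> w = 0"
  shows "F ` D = UNIV"
proof (rule closed_subspace_eq_UNIV[OF cl])
  show "0 \<in> F ` D" using clin_f0[OF lin] clin_zero[OF lin] by force
  show "\<forall>a\<in>F ` D. \<forall>b\<in>F ` D. a + b \<in> F ` D"
  proof (intro ballI)
    fix a b assume "a \<in> F ` D" "b \<in> F ` D"
    then obtain u v where "u \<in> D" "v \<in> D" "a = F u" "b = F v" by auto
    then have "a + b = F (u + v)" "u + v \<in> D" using clin_add[OF lin] clin_add_mem[OF lin] by auto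
    then show "a + b \<in> F ` D" by simp
  qed
  show "\<forall>r. \<forall>a\<in>F ` D. scaleR r a \<in> F ` D"
  proof (intro allI ballI)
    fix r a assume "a \<in> F ` D"
    then obtain u where u: "u \<in> D" "a = F u" by auto
    then have "scaleR r a = F (scaleC (complex_of_real r) u)"
      using clin_scale[OF lin u(1)] by (simp add: scaleR_scaleC)
    then show "scaleR r a \<in> F ` D" using clin_scale_mem[OF lin u(1)] by simp
  qed
  show "\<forall>w. (\<forall>v\<in>F ` D. inner v w = 0) \<longrightarrow> w = 0"
  proof (intro allI impI)
    fix w assume o: "\<forall>v\<in>F ` D. inner v w = 0"
    show "w = 0"
    proof (rule orth)
      fix x assume x: "x \<in> D"
      have "scaleC \<i> (F x) \<in> F ` D"
        using clin_scale[OF lin x, of \<i>] clin_scale_mem[OF lin x, of \<i>] by (metis image_eqI)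
      then show "cinner (F x) w = 0" using o x by (intro cinner_zero_from_inner) auto
    qed
  qed
qed

text \<open>A coercive self-adjoint operator is onto: its graph is closed by self-adjointness,
and a vector orthogonal to its range lies in the domain of the adjoint.\<close>
lemma selfadjoint_coercive_surj:
  fixes T0 :: "'a::{complex_inner,complete_space} \<Rightarrow> 'a"
  assumes sa: "selfadjoint_op D0 T0" and c: "c > 0"
    and co: "\<forall>x\<in>D0. c * (norm x)^2 \<le> Re (cinner (T0 x) x)"
  shows "T0 ` D0 = UNIV"
proof -
  have lin: "clinear_on D0 T0" and dense: "closure D0 = UNIV"
    and sym: "\<forall>x\<in>D0. \<forall>y\<in>D0. cinner (T0 x) y = cinner x (T0 y)"
    and adj: "\<forall>y z. (\<forall>x\<in>D0. cinner (T0 x) y = cinner x z) \<longrightarrow> y \<in> D0"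
    using sa unfolding selfadjoint_op_def by blast+
  show ?thesis
  proof (rule range_eq_UNIV_of_closed[OF lin])
    show "closed (T0 ` D0)"
    proof (rule closed_range_of_bounded_below[OF lin c])
      show "c * norm x \<le> norm (T0 x)" if "x \<in> D0" for x
        using co that by (simp add: coercive_bounded_below)
      show "p \<in> D0 \<and> T0 p = l"
        if xD: "\<And>n. x n \<in> D0" and xp: "x \<longlonglongrightarrow> p" and Tl: "(\<lambda>n. T0 (x n)) \<longlonglongrightarrow> l" for x p l
      proof -
        have lim: "cinner (T0 v) p = cinner v l" if vD: "v \<in> D0" for v
        proof -
          have "(\<lambda>n. cinner (T0 v) (x n)) \<longlonglongrightarrow> cinner (T0 v) p"
            by (rule bounded_linear.tendsto[OF bounded_linear_cinner_right xp])
          moreover have "(\<lambda>n. cinner (T0 v) (x n)) \<longlonglongrightarrow> cinner v l"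
            using bounded_linear.tendsto[OF bounded_linear_cinner_right Tl] sym vD xD by simp
          ultimately show ?thesis by (rule LIMSEQ_unique)
        qed
        then have pD: "p \<in> D0" using adj by blast
        have "\<forall>v\<in>D0. cinner v (T0 p - l) = 0"
          using lim sym pD by (simp add: cinner_diff_right)
        then have "T0 p - l = 0" by (rule cinner_orth_dense[OF dense])
        then show ?thesis using pD by simp
      qed
    qed
    show "w = 0" if "\<And>x. x \<in> D0 \<Longrightarrow> cinner (T0 x) w = 0" for w
    proof -
      have "w \<in> D0" using adj[rule_format, of w 0] that by simp
      then have "c * (norm w)^2 \<le> 0" using co that by force
      then show ?thesis using c by (simp add: mult_le_0_iff)
    qed
  qed
qed

lemma clinear_on_inv:
  assumes lin: "clinear_on UNIV G" and G_inv: "\<And>w. G (Gi w) = w" "\<And>y. Gi (G y) = y"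
  shows "clinear_on UNIV Gi"
  unfolding clinear_on_UNIV_iff
proof (intro conjI allI)
  fix x y
  have "G (Gi x + Gi y) = x + y" using lin G_inv by (simp add: clinear_on_UNIV_iff)
  then show "Gi (x + y) = Gi x + Gi y" using G_inv(2) by metis
next
  fix a x
  have "G (scaleC a (Gi x)) = scaleC a x" using lin G_inv by (simp add: clinear_on_UNIV_iff)
  then show "Gi (scaleC a x) = scaleC a (Gi x)" using G_inv(2) by metis
qed

text \<open>Lax--Milgram, in the form needed here: a bounded operator G on H that is coercive
after a rotation by a complex factor zeta, c |y|^2 \<le> Re (zeta (G y, y)), is bounded
below by c / |zeta| and onto.\<close>
lemma rotated_coercive_bounded_below:
  assumes co: "c * (norm y)^2 \<le> Re (\<zeta> * cinner v y)"
  shows "c * norm y \<le> cmod \<zeta> * norm v"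
  using coercive_bounded_below[of c y "scaleC \<zeta> v"] co
  by (simp add: cinner_scaleC_left norm_scaleC)

lemma rotated_coercive_surj:
  fixes G :: "'a::{complex_inner,complete_space} \<Rightarrow> 'a"
  assumes lin: "clinear_on UNIV G" and bd: "\<And>y. norm (G y) \<le> K * norm y"
    and c: "c > 0" and co: "\<And>y. c * (norm y)^2 \<le> Re (\<zeta> * cinner (G y) y)"
  shows "surj G"
proof (cases "\<zeta> = 0")
  case True
  then have "y = 0" for y :: 'a
    using rotated_coercive_bounded_below[OF co[of y]] c by (simp add: mult_le_0_iff)
  then have "w = G 0" for w using clin_f0[OF lin] by metis
  then show ?thesis by blast
next
  case False
  show ?thesis
  proof (rule range_eq_UNIV_of_closed[OF lin])
    have blG: "bounded_linear G" by (rule bounded_linear_of_clinear[OF lin bd])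
    show "closed (range G)"
    proof (rule closed_range_of_bounded_below[OF lin])
      show "c / cmod \<zeta> > 0" using c False by simp
      show "c / cmod \<zeta> * norm x \<le> norm (G x)" for x
        using rotated_coercive_bounded_below[OF co[of x]] False by (simp add: field_simps)
      show "p \<in> UNIV \<and> G p = l"
        if "x \<longlonglongrightarrow> p" and "(\<lambda>n. G (x n)) \<longlonglongrightarrow> l" for x p l
        using bounded_linear.tendsto[OF blG that(1)] that(2) LIMSEQ_unique by blast
    qed
    show "w = 0" if "\<And>x. x \<in> UNIV \<Longrightarrow> cinner (G x) w = 0" for w
      using co[of w] that[of w] c by (simp add: mult_le_0_iff)
  qed
qed

lemma coercive_operator_inverse:
  fixes G :: "'a::{complex_inner,complete_space} \<Rightarrow> 'a"
  assumes lin: "clinear_on UNIV G" and bd: "\<And>y. norm (G y) \<le> K * norm y"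
    and c: "c > 0" and co: "\<And>y. c * (norm y)^2 \<le> Re (\<zeta> * cinner (G y) y)"
  shows "\<exists>Gi. clinear_on UNIV Gi \<and> (\<forall>w. G (Gi w) = w) \<and> (\<forall>y. Gi (G y) = y)
           \<and> (\<forall>w. c * norm (Gi w) \<le> cmod \<zeta> * norm w)"
proof -
  have below: "c * norm y \<le> cmod \<zeta> * norm (G y)" for y
    using rotated_coercive_bounded_below[OF co[of y]] .
  have "inj G"
  proof (rule injI)
    fix x y assume "G x = G y"
    then have "G (x - y) = 0" using clin_diff[OF lin] by simp
    then show "x = y" using below[of "x - y"] c by (simp add: mult_le_0_iff)
  qed
  moreover have "surj G" by (rule rotated_coercive_surj[OF lin bd c co])
  ultimately have G_inv: "G (inv G w) = w" "inv G (G y) = y" for w y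
    by (simp_all add: surj_f_inv_f inv_f_f)
  moreover have "c * norm (inv G w) \<le> cmod \<zeta> * norm w" for w
    using below[of "inv G w"] G_inv by simp
  ultimately show ?thesis using clinear_on_inv[OF lin] by blast
qed

section \<open>Scalar estimates\<close>

text \<open>The quadratic form of the pencil, tested against x and multiplied by conj(z + k),
written out in real terms. Here X = |x|^2, Y = |x|_1^2, P = (D x, x) and
s = (S~ x, x); a = Re z and b = Im z.\<close>
lemma Re_pencil_form_expansion:
  fixes z P :: complex and k X Y s :: real
  shows "Re (cnj (z + complex_of_real k)
             * (z^2 * complex_of_real X + z * P + complex_of_real Y + \<i> * complex_of_real s))
    = (Re P - k * X + Re z * X) * (Im z)^2 + Im z * (s - k * Im P)
      + ((Re z)^2 * (Re z * X + k * X + Re P) + k * Re z * Re P + (Re z + k) * Y)"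
  by (cases z; cases P) (simp add: power2_eq_square algebra_simps)

lemma abs_le_of_sq_le_4_mult:
  fixes t P Q :: real
  assumes h: "t^2 \<le> 4 * P * Q" and P: "P \<ge> 0" and Q: "Q \<ge> 0"
  shows "\<bar>t\<bar> \<le> P + Q"
proof -
  have "(P + Q)^2 = (P - Q)^2 + 4 * P * Q" by (simp add: power2_eq_square algebra_simps)
  then have "t^2 \<le> (P + Q)^2" using h zero_le_power2[of "P - Q"] by linarith
  then have "\<bar>t\<bar>^2 \<le> (P + Q)^2" by simp
  then show ?thesis by (rule power2_le_imp_le) (use P Q in auto)
qed

lemma le_of_sq_le_4_mult:
  fixes t P Q :: real
  assumes "t^2 \<le> 4 * P * Q" "P \<ge> 0" "Q \<ge> 0"
  shows "t \<le> P + Q"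
  using abs_le_of_sq_le_4_mult[OF assms] by simp

text \<open>The terms of the expansion not involving Im z: for Re z = a \<ge> 0 they dominate
(a + k) Y, for a < 0 (but a + k > 0) they dominate k Y + a w Y, where w bounds the
quotient defining omega2.\<close>
lemma pencil_form_constant_nonneg:
  fixes a k X Y d1 :: real
  assumes "0 \<le> a" "k > 0" "X \<ge> 0" "d1 \<ge> 0"
  shows "(a + k) * Y \<le> a^2 * (a * X + k * X + d1) + k * a * d1 + (a + k) * Y"
proof -
  have "0 \<le> a^2 * (a * X + k * X + d1)" using assms by (intro mult_nonneg_nonneg) auto
  moreover have "0 \<le> k * a * d1" using assms by simp
  ultimately show ?thesis by linarith
qed

lemma pencil_form_constant_neg:
  fixes a k X Y d1 w :: real
  assumes a: "a < 0" "a + k > 0" and k: "k > 0" and X: "X \<ge> 0" and d1: "d1 \<ge> 0"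
    and w: "Y + k * d1 + k^2 * X \<le> w * Y"
  shows "k * Y + a * w * Y \<le> a^2 * (a * X + k * X + d1) + k * a * d1 + (a + k) * Y"
proof -
  have "a * (w * Y) \<le> a * (Y + k * d1 + k^2 * X)"
    using w a by (intro mult_left_mono_neg) auto
  moreover have "0 \<le> a * X * (a * (a + k) - k^2)"
  proof (rule mult_nonpos_nonpos)
    show "a * X \<le> 0" using a X by (simp add: mult_nonpos_nonneg)
    have "a * (a + k) < 0" using a by (simp add: mult_neg_pos)
    moreover have "0 < k^2" using k by simp
    ultimately show "a * (a + k) - k^2 \<le> 0" by linarith
  qed
  moreover have "0 \<le> a^2 * d1" using d1 by simp
  moreover have "a^2 * (a * X + k * X + d1) + k * a * d1 + (a + k) * Y - k * Y
      - a * (Y + k * d1 + k^2 * X) = a^2 * d1 + a * X * (a * (a + k) - k^2)"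
    by (simp add: power2_eq_square algebra_simps)
  ultimately show ?thesis by (simp add: mult.assoc)
qed

text \<open>The scalar heart of the argument: if Re z = a lies to the right of
-k (1 - m) / w, then the expansion above is bounded below by c Y for some c > 0,
uniformly in every quantity controlled by the hypotheses, provided the cross term t
is absorbed by the Im z-part up to m k Y.\<close>
lemma pencil_form_coercivity:
  fixes a k m w :: real
  assumes k: "k > 0" and m: "0 \<le> m" "m \<le> 1" and w: "w \<ge> 1"
    and a: "a > - k * ((1 - m) / w)"
  shows "\<exists>c>0. \<forall>X Y d1 t b. X \<ge> 0 \<longrightarrow> Y \<ge> 0 \<longrightarrow> d1 \<ge> 0
      \<longrightarrow> Y + k * d1 + k^2 * X \<le> w * Y
      \<longrightarrow> \<bar>t\<bar> \<le> (d1 - k * X + a * X) * b^2 + m * k * Y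
      \<longrightarrow> c * Y \<le> (d1 - k * X + a * X) * b^2 + t
                  + (a^2 * (a * X + k * X + d1) + k * a * d1 + (a + k) * Y)"
proof (cases "a \<ge> 0")
  case True
  show ?thesis
  proof (intro exI[of _ "a + k * (1 - m)"] conjI allI impI)
    show "a + k * (1 - m) > 0"
    proof (cases "m = 1")
      case True
      then show ?thesis using a by simp
    next
      case False
      then show ?thesis using \<open>a \<ge> 0\<close> k m by (simp add: add_nonneg_pos)
    qed
    fix X Y d1 t b :: real
    assume X: "X \<ge> 0" and "Y \<ge> 0" and d1: "d1 \<ge> 0"
      and "Y + k * d1 + k^2 * X \<le> w * Y" and t: "\<bar>t\<bar> \<le> (d1 - k * X + a * X) * b^2 + m * k * Y"
    have "(a + k) * Y \<le> a^2 * (a * X + k * X + d1) + k * a * d1 + (a + k) * Y"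
      using True k X d1 by (rule pencil_form_constant_nonneg)
    moreover have "(a + k * (1 - m)) * Y = (a + k) * Y - m * k * Y" by (simp add: algebra_simps)
    ultimately show "(a + k * (1 - m)) * Y \<le> (d1 - k * X + a * X) * b^2 + t
        + (a^2 * (a * X + k * X + d1) + k * a * d1 + (a + k) * Y)"
      using t by linarith
  qed
next
  case False
  have "- a < k * ((1 - m) / w)" using a by simp
  then have aw: "- a * w < k * (1 - m)" using w by (simp add: field_simps)
  moreover have "- a \<le> - a * w" using False w by (simp add: mult_le_cancel_left1)
  moreover have "k * (1 - m) \<le> k" using k m by (simp add: mult_left_le)
  ultimately have ak: "a + k > 0" by linarith
  show ?thesis
  proof (intro exI[of _ "k * (1 - m) + a * w"] conjI allI impI)
    show "k * (1 - m) + a * w > 0" using aw by simp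
    fix X Y d1 t b :: real
    assume X: "X \<ge> 0" and "Y \<ge> 0" and d1: "d1 \<ge> 0"
      and wY: "Y + k * d1 + k^2 * X \<le> w * Y"
      and t: "\<bar>t\<bar> \<le> (d1 - k * X + a * X) * b^2 + m * k * Y"
    have "k * Y + a * w * Y \<le> a^2 * (a * X + k * X + d1) + k * a * d1 + (a + k) * Y"
      using False ak k X d1 wY by (intro pencil_form_constant_neg) auto
    moreover have "(k * (1 - m) + a * w) * Y = k * Y + a * w * Y - m * k * Y"
      by (simp add: algebra_simps)
    ultimately show "(k * (1 - m) + a * w) * Y \<le> (d1 - k * X + a * X) * b^2 + t
        + (a^2 * (a * X + k * X + d1) + k * a * d1 + (a + k) * Y)"
      using t by linarith
  qed
qed

text \<open>Cross-term estimate under the hypotheses of Theorem 1: the imaginary part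
b (s - k d2) is absorbed using omega1 (bound wa) and a Cauchy--Schwarz bound BB Y for
(s / k - d2)^2.\<close>
lemma cross_term_bound_omega1:
  fixes a b k m X Y d1 d2 s BB wa :: real
  assumes k: "k > 0" and m: "m > 0" and X: "X \<ge> 0" and Y: "Y \<ge> 0"
    and cs: "(s / k - d2)^2 \<le> BB * Y"
    and om: "wa * X \<le> d1 / k - X - BB / (4 * m)"
    and a: "a \<ge> - k * wa" and BB: "BB \<ge> 0"
  shows "\<bar>b * (s - k * d2)\<bar> \<le> (d1 - k * X + a * X) * b^2 + m * k * Y"
proof -
  define G where "G = d1 - k * X - k * wa * X"
  have "k * (wa * X) \<le> k * (d1 / k - X - BB / (4 * m))" using om k by (intro mult_left_mono) auto
  then have "k * wa * X \<le> d1 - k * X - k * BB / (4 * m)" using k by (simp add: algebra_simps)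
  then have "k * BB / (4 * m) \<le> G" unfolding G_def by linarith
  then have kB: "k * BB \<le> 4 * m * G" using m by (simp add: field_simps)
  have "0 \<le> (4 * m) * G" using kB k BB by (smt (verit) mult_nonneg_nonneg)
  then have G0: "G \<ge> 0" using m by (simp add: zero_le_mult_iff)
  have FG: "G \<le> d1 - k * X + a * X"
    using mult_right_mono[OF a X] by (simp add: G_def)
  have "(b * (s - k * d2))^2 = b^2 * k^2 * (s / k - d2)^2"
    using k by (simp add: power2_eq_square field_simps)
  also have "\<dots> \<le> b^2 * k^2 * (BB * Y)" using cs by (intro mult_left_mono) auto
  also have "\<dots> = b^2 * k * Y * (k * BB)" by (simp add: power2_eq_square algebra_simps)
  also have "\<dots> \<le> b^2 * k * Y * (4 * m * (d1 - k * X + a * X))"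
  proof (rule mult_left_mono)
    show "k * BB \<le> 4 * m * (d1 - k * X + a * X)"
      using kB mult_left_mono[OF FG, of "4 * m"] m by linarith
  qed (use k Y in simp)
  also have "\<dots> = 4 * ((d1 - k * X + a * X) * b^2) * (m * k * Y)" by (simp add: algebra_simps)
  finally show ?thesis
    using G0 FG k m Y by (intro abs_le_of_sq_le_4_mult) auto
qed

text \<open>Cross-term estimate under the hypotheses of Theorem 2: here s and d2 are bounded
separately by the operator norms NS and ND, and the two pieces are absorbed with
weights p and q.\<close>
lemma cross_term_bound_omega1':
  fixes a b k p q X Y d1 d2 s NS ND del a0 :: real
  assumes k: "k > 0" and p: "p > 0" and q: "q > 0" and X: "X \<ge> 0" and Y: "Y \<ge> 0"
    and a0: "a0 > 0" and sb: "\<bar>s\<bar> \<le> NS * Y" and db: "\<bar>d2\<bar> \<le> ND * Y"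
    and d1: "del * Y \<le> d1" and YX: "a0 * X \<le> Y"
    and W: "a0 * (del / k - NS^2 / (4 * p * k^2) - ND^2 / (4 * q)) \<ge> 1"
    and a: "a \<ge> - k * (a0 * (del / k - NS^2 / (4 * p * k^2) - ND^2 / (4 * q)) - 1)"
  shows "\<bar>b * (s - k * d2)\<bar> \<le> (d1 - k * X + a * X) * b^2 + (p + q) * k * Y"
proof -
  define W where "W = del / k - NS^2 / (4 * p * k^2) - ND^2 / (4 * q)"
  have W0: "W \<ge> 0" using W a0 unfolding W_def by (smt (verit) mult_pos_neg)
  have t1: "\<bar>b * s\<bar> \<le> p * k * Y + NS^2 * b^2 * Y / (4 * p * k)"
  proof -
    have "\<bar>b * s\<bar> \<le> \<bar>b\<bar> * (NS * Y)" using sb by (simp add: abs_mult mult_left_mono)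
    also have "\<dots> \<le> p * k * Y + NS^2 * b^2 * Y / (4 * p * k)"
    proof (rule le_of_sq_le_4_mult)
      show "(\<bar>b\<bar> * (NS * Y))^2 \<le> 4 * (p * k * Y) * (NS^2 * b^2 * Y / (4 * p * k))"
        using p k by (simp add: power2_eq_square field_simps)
    qed (use p k Y in auto)
    finally show ?thesis .
  qed
  have t2: "\<bar>k * b * d2\<bar> \<le> q * k * Y + k * ND^2 * b^2 * Y / (4 * q)"
  proof -
    have "\<bar>k * b * d2\<bar> \<le> k * \<bar>b\<bar> * (ND * Y)" using db k by (simp add: abs_mult mult_left_mono)
    also have "\<dots> \<le> q * k * Y + k * ND^2 * b^2 * Y / (4 * q)"
    proof (rule le_of_sq_le_4_mult)
      show "(k * \<bar>b\<bar> * (ND * Y))^2 \<le> 4 * (q * k * Y) * (k * ND^2 * b^2 * Y / (4 * q))"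
        using q k by (simp add: power2_eq_square field_simps)
    qed (use q k Y in auto)
    finally show ?thesis .
  qed
  have e: "NS^2 * b^2 * Y / (4 * p * k) + k * ND^2 * b^2 * Y / (4 * q) = b^2 * (del * Y - k * W * Y)"
    unfolding W_def using p q k by (simp add: power2_eq_square field_simps)
  have F: "del * Y - k * W * Y \<le> d1 - k * X + a * X"
  proof -
    have "k * W * (a0 * X) \<le> k * W * Y" using YX k W0 by (intro mult_left_mono) auto
    moreover have "(k - a) * X \<le> k * W * a0 * X"
    proof -
      have "k - a \<le> k * (a0 * W)" using a unfolding W_def by (simp add: algebra_simps)
      then have "(k - a) * X \<le> (k * (a0 * W)) * X" using X by (rule mult_right_mono)
      then show ?thesis by (simp add: algebra_simps)
    qed
    ultimately show ?thesis using d1 by (simp add: algebra_simps)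
  qed
  have "b * (s - k * d2) = b * s - k * b * d2" by (simp add: algebra_simps)
  then have "\<bar>b * (s - k * d2)\<bar> \<le> \<bar>b * s\<bar> + \<bar>k * b * d2\<bar>"
    by (simp only: abs_triangle_ineq4)
  also have "\<dots> \<le> (p + q) * k * Y + b^2 * (del * Y - k * W * Y)" using t1 t2 e by (simp add: algebra_simps)
  also have "\<dots> \<le> (p + q) * k * Y + b^2 * (d1 - k * X + a * X)" using F by (simp add: mult_left_mono)
  finally show ?thesis by (simp add: algebra_simps)
qed

lemma real_of_ereal_INF_le:
  fixes f :: "'a \<Rightarrow> real"
  assumes "0 \<le> (INF y\<in>A. ereal (f y))" and "x \<in> A"
  shows "real_of_ereal (INF y\<in>A. ereal (f y)) \<le> f x"
proof -
  have "(INF y\<in>A. ereal (f y)) \<le> ereal (f x)" using assms(2) by (rule INF_lower)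
  then show ?thesis using assms(1) by (cases "INF y\<in>A. ereal (f y)") auto
qed

lemma le_Sup_quotient:
  fixes g w :: "'a \<Rightarrow> real"
  assumes Px: "P x" and pos: "\<And>y. P y \<Longrightarrow> 0 < w y" and bd: "\<And>y. P y \<Longrightarrow> g y \<le> K * w y"
  shows "g x \<le> Sup {g y / w y | y. P y} * w x"
proof -
  have "g x / w x \<le> Sup {g y / w y | y. P y}"
  proof (rule cSup_upper)
    show "g x / w x \<in> {g y / w y | y. P y}" using Px by blast
    show "bdd_above {g y / w y | y. P y}"
      using pos bd by (intro bdd_aboveI[of _ K]) (auto simp: divide_le_eq)
  qed
  then show ?thesis using pos[OF Px] by (simp add: divide_le_eq)
qed

section \<open>The operator setting\<close>

locale pencil_setting =
  fixes DT DR :: "'h::{complex_inner,complete_space} set" and T R S Dr :: "'h \<Rightarrow> 'h"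
    and a0 :: real
  assumes a0_pos: "a0 > 0" and T_sa: "selfadjoint_op DT T"
    and T_ge: "\<forall>x\<in>DT. a0 * (norm x)^2 \<le> Re (cinner (T x) x)"
    and R_sqrt: "is_op_sqrt DT T DR R" and S_sa: "bounded_selfadjoint S"
    and D_bdd: "bounded_1_m1 DR R Dr"
begin

lemma R_lin: "clinear_on DR R"
  and R_sym: "x \<in> DR \<Longrightarrow> y \<in> DR \<Longrightarrow> cinner (R x) y = cinner x (R y)"
  and DT_eq: "DT = {x \<in> DR. R x \<in> DR}" and T_eq: "x \<in> DT \<Longrightarrow> T x = R (R x)"
  using R_sqrt unfolding is_op_sqrt_def selfadjoint_op_def by blast+

lemma R_inj:
  assumes "x \<in> DR" "y \<in> DR" "R x = R y"
  shows "x = y"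
proof -
  let ?u = "x - y"
  have uD: "?u \<in> DR" using clin_diff_mem[OF R_lin assms(1,2)] .
  have Ru: "R ?u = 0" using clin_diff[OF R_lin assms(1,2)] assms(3) by simp
  then have "?u \<in> DT" using uD clin_zero[OF R_lin] DT_eq by simp
  moreover have "T ?u = 0" using T_eq[OF calculation] Ru clin_f0[OF R_lin] by simp
  ultimately have "a0 * (norm ?u)^2 \<le> 0" using T_ge by fastforce
  then show ?thesis using a0_pos by (simp add: mult_le_0_iff)
qed

lemma R_surj: "\<exists>x\<in>DR. R x = w"
proof -
  have "T ` DT = UNIV" using selfadjoint_coercive_surj[OF T_sa a0_pos T_ge] .
  then obtain u where "u \<in> DT" "T u = w" by (metis UNIV_I imageE)
  then show ?thesis using DT_eq T_eq by auto
qed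

lemma rinv_mem: "rinv DR R w \<in> DR" and R_rinv: "R (rinv DR R w) = w"
proof -
  have "\<exists>!x. x \<in> DR \<and> R x = w" using R_surj R_inj by blast
  then have "rinv DR R w \<in> DR \<and> R (rinv DR R w) = w" unfolding rinv_def by (rule theI')
  then show "rinv DR R w \<in> DR" "R (rinv DR R w) = w" by auto
qed

lemma rinv_R: "x \<in> DR \<Longrightarrow> rinv DR R (R x) = x"
  using R_inj rinv_mem R_rinv by blast

lemma rinv_add: "rinv DR R (x + y) = rinv DR R x + rinv DR R y"
proof -
  have "R (rinv DR R x + rinv DR R y) = x + y"
    using clin_add[OF R_lin rinv_mem rinv_mem] R_rinv by simp
  then show ?thesis using rinv_R[OF clin_add_mem[OF R_lin rinv_mem rinv_mem]] by metis
qed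

lemma rinv_scale: "rinv DR R (scaleC c x) = scaleC c (rinv DR R x)"
proof -
  have "R (scaleC c (rinv DR R x)) = scaleC c x"
    using clin_scale[OF R_lin rinv_mem] R_rinv by simp
  then show ?thesis using rinv_R[OF clin_scale_mem[OF R_lin rinv_mem]] by metis
qed

text \<open>The embedding H_1 \<subseteq> H: a0 |x|^2 \<le> |x|_1^2. Writing x = R u with u \<in> DT gives
|x|^2 = (T u, u) \<ge> a0 |u|^2 and |x|^2 \<le> |R x| |u|; eliminate |u|.\<close>
lemma R_lower:
  assumes xD: "x \<in> DR"
  shows "a0 * (norm x)^2 \<le> (norm (R x))^2"
proof -
  define u where "u = rinv DR R x"
  have Ru: "R u = x" by (simp add: u_def R_rinv)
  have uDT: "u \<in> DT" using DT_eq rinv_mem Ru xD by (simp add: u_def)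
  have Tu: "T u = R x" using T_eq[OF uDT] Ru by simp
  have "cinner (T u) u = cinner x x"
    using T_eq[OF uDT] R_sym[of x u] Ru xD rinv_mem by (simp add: u_def)
  then have nx: "(norm x)^2 = Re (cinner (T u) u)" by (simp add: Re_cinner_self)
  have h1: "(norm x)^2 \<le> norm (R x) * norm u"
    using nx Re_cinner_le[of "T u" u] Tu by simp
  have h2: "a0 * (norm u)^2 \<le> (norm x)^2" using T_ge uDT nx by simp
  have "(norm x)^2 * (norm x)^2 \<le> (norm (R x) * norm u) * (norm (R x) * norm u)"
    using mult_mono[OF h1 h1] by simp
  then have "a0 * (norm x)^2 * (norm x)^2 \<le> a0 * (norm (R x) * norm u)^2"
    using a0_pos by (simp add: power2_eq_square mult.assoc)
  also have "\<dots> = (norm (R x))^2 * (a0 * (norm u)^2)" by (simp add: power_mult_distrib)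
  also have "\<dots> \<le> (norm (R x))^2 * (norm x)^2" using h2 by (rule mult_left_mono) simp
  finally show ?thesis by (cases "x = 0") auto
qed

lemma norm1_pos: "x \<in> DR \<Longrightarrow> x \<noteq> 0 \<Longrightarrow> (norm (R x))^2 > 0"
  using R_lower[of x] a0_pos by (smt (verit) mult_pos_pos zero_less_norm_iff zero_less_power)

lemma rinv_bound: "norm (rinv DR R y) \<le> (1 / sqrt a0) * norm y"
proof -
  have "a0 * (norm (rinv DR R y))^2 \<le> (norm y)^2" using R_lower[OF rinv_mem] R_rinv by simp
  then have "(sqrt a0 * norm (rinv DR R y))^2 \<le> (norm y)^2"
    using a0_pos by (simp add: power_mult_distrib)
  then have "sqrt a0 * norm (rinv DR R y) \<le> norm y" by (rule power2_le_imp_le) simp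
  then show ?thesis using a0_pos by (simp add: field_simps)
qed

definition normD :: real where
  "normD = (SOME C. C \<ge> 0 \<and> (\<forall>x\<in>DR. norm (Dr x) \<le> C * norm (R x)))"

lemma D_lin: "clinear_on DR Dr"
  using D_bdd unfolding bounded_1_m1_def by blast

lemma normD: "normD \<ge> 0" "x \<in> DR \<Longrightarrow> norm (Dr x) \<le> normD * norm (R x)"
proof -
  obtain C where C: "\<forall>x\<in>DR. norm (Dr x) \<le> C * norm (R x)"
    using D_bdd unfolding bounded_1_m1_def by blast
  have "\<forall>x\<in>DR. norm (Dr x) \<le> max C 0 * norm (R x)"
    using C by (meson max.cobounded1 mult_right_mono norm_ge_zero order_trans)
  then have "\<exists>C. C \<ge> 0 \<and> (\<forall>x\<in>DR. norm (Dr x) \<le> C * norm (R x))"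
    by (intro exI[of _ "max C 0"]) auto
  from someI_ex[OF this] show "normD \<ge> 0" "x \<in> DR \<Longrightarrow> norm (Dr x) \<le> normD * norm (R x)"
    unfolding normD_def by blast+
qed

abbreviation "Dp \<equiv> Dprime DR R Dr"

lemma Dp_clinear: "clinear_on UNIV Dp"
  unfolding clinear_on_UNIV_iff
  by (simp add: Dprime_def rinv_add rinv_scale clin_add[OF D_lin rinv_mem rinv_mem]
      clin_scale[OF D_lin rinv_mem])

lemma Dp_bound: "norm (Dp x) \<le> normD * norm x"
  using normD(2)[OF rinv_mem, of x] by (simp add: Dprime_def R_rinv)

lemma Dp_R: "x \<in> DR \<Longrightarrow> Dp (R x) = Dr x"
  by (simp add: Dprime_def rinv_R)

lemma Dp_adj_pair: "x \<in> DR \<Longrightarrow> cinner (cadj Dp (R x)) (R x) = cnj (cinner (Dr x) (R x))"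
  using cadj_prop[OF Dp_clinear Dp_bound, of "R x" "R x"] cinner_commute[of "cadj Dp (R x)" "R x"]
  by (simp add: Dp_R)

lemma D1_pair:
  assumes "x \<in> DR"
  shows "cinner (D1rep DR R Dr x) (R x) = complex_of_real (Re (cinner (Dr x) (R x)))"
proof -
  let ?P = "cinner (Dr x) (R x)"
  have "cinner (D1rep DR R Dr x) (R x) = (1/2) * (?P + cnj ?P)"
    unfolding D1rep_def using Dp_adj_pair[OF assms] Dp_R[OF assms]
    by (simp add: cinner_scaleC_left cinner_add_left)
  also have "\<dots> = complex_of_real (Re ?P)" by (simp add: complex_add_cnj)
  finally show ?thesis .
qed

lemma D2_pair:
  assumes "x \<in> DR"
  shows "cinner (D2rep DR R Dr x) (R x) = complex_of_real (Im (cinner (Dr x) (R x)))"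
proof -
  let ?P = "cinner (Dr x) (R x)"
  have "cinner (D2rep DR R Dr x) (R x) = (1 / (2 * \<i>)) * (?P - cnj ?P)"
    unfolding D2rep_def using Dp_adj_pair[OF assms] Dp_R[OF assms]
    by (simp add: cinner_scaleC_left cinner_diff_left)
  also have "\<dots> = complex_of_real (Im ?P)" by (simp add: complex_diff_cnj field_simps)
  finally show ?thesis .
qed

lemma D2_bound:
  assumes "x \<in> DR"
  shows "norm (D2rep DR R Dr x) \<le> normD * norm (R x)"
proof -
  have "norm (D2rep DR R Dr x) = (1/2) * norm (Dp (R x) - cadj Dp (R x))"
    unfolding D2rep_def by (simp add: norm_scaleC norm_divide norm_mult)
  also have "\<dots> \<le> (1/2) * (norm (Dp (R x)) + norm (cadj Dp (R x)))"
    by (simp add: norm_triangle_ineq4)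
  also have "\<dots> \<le> (1/2) * (normD * norm (R x) + normD * norm (R x))"
    using Dp_bound cadj_bound[OF Dp_clinear Dp_bound normD(1)] by (intro mult_left_mono add_mono) auto
  finally show ?thesis by (simp add: algebra_simps)
qed

lemma S_lin: "S (x + y) = S x + S y" and S_hom: "S (scaleC c x) = scaleC c (S x)"
  and S_sym: "cinner (S x) y = cinner x (S y)"
  using S_sa unfolding bounded_selfadjoint_def bounded_clinear_op_def clinear_on_def by auto

definition normS :: real where
  "normS = (SOME K. K \<ge> 0 \<and> (\<forall>x. norm (S x) \<le> K * norm x))"

lemma normS: "normS \<ge> 0" "norm (S x) \<le> normS * norm x"
proof -
  obtain K where K: "\<forall>x. norm (S x) \<le> K * norm x"
    using S_sa unfolding bounded_selfadjoint_def bounded_clinear_op_def by blast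
  have "\<forall>x. norm (S x) \<le> max K 0 * norm x"
    using K by (meson max.cobounded1 mult_right_mono norm_ge_zero order_trans)
  then have "\<exists>K. K \<ge> 0 \<and> (\<forall>x. norm (S x) \<le> K * norm x)" by (intro exI[of _ "max K 0"]) auto
  from someI_ex[OF this] show "normS \<ge> 0" "norm (S x) \<le> normS * norm x"
    unfolding normS_def by blast+
qed

lemma S_real: "cinner (S y) y = complex_of_real (Re (cinner (S y) y))"
proof -
  have "cinner (S y) y = cnj (cinner (S y) y)"
    using S_sym[of y y] cinner_commute[of "S y" y] by simp
  then have "Im (cinner (S y) y) = 0" by (metis cnj.simps(2) neg_equal_zero)
  then show ?thesis by (simp add: complex_eq_iff)
qed

lemma pencil_pair:
  assumes xD: "x \<in> DR"
  shows "cinner (pencil_rep DR R S Dr z x) (R x) = z^2 * complex_of_real ((norm x)^2)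
     + z * cinner (Dr x) (R x) + complex_of_real ((norm (R x))^2)
     + \<i> * complex_of_real (Re (cinner (S (R x)) (R x)))"
proof -
  have "cinner (rinv DR R x) (R x) = cinner x x"
    using R_sym[OF rinv_mem xD] by (simp add: R_rinv)
  then have "cinner (rinv DR R x) (R x) = complex_of_real ((norm x)^2)"
    by (simp add: cinner_self)
  then show ?thesis
    unfolding pencil_rep_def cinner_add_left cinner_scaleC_left
    using S_real[of "R x"] cinner_self[of "R x"] by (simp only: add.assoc)
qed

lemma pencil_form_expansion:
  assumes xD: "x \<in> DR"
  shows "Re (cnj (z + complex_of_real k) * cinner (pencil_rep DR R S Dr z x) (R x))
    = (Re (cinner (Dr x) (R x)) - k * (norm x)^2 + Re z * (norm x)^2) * (Im z)^2
      + Im z * (Re (cinner (S (R x)) (R x)) - k * Im (cinner (Dr x) (R x)))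
      + ((Re z)^2 * (Re z * (norm x)^2 + k * (norm x)^2 + Re (cinner (Dr x) (R x)))
         + k * Re z * Re (cinner (Dr x) (R x)) + (Re z + k) * (norm (R x))^2)"
  unfolding pencil_pair[OF xD] by (rule Re_pencil_form_expansion)

lemma Stilde_D2_cauchy_schwarz:
  assumes xD: "x \<in> DR" and k: "k > 0"
  shows "(Re (cinner (S (R x)) (R x)) / k - Im (cinner (Dr x) (R x)))^2
    \<le> (norm (scaleC (complex_of_real (1/k)) (S (R x)) - D2rep DR R Dr x))^2 * (norm (R x))^2"
proof -
  let ?B = "scaleC (complex_of_real (1/k)) (S (R x)) - D2rep DR R Dr x"
  have eq: "cinner ?B (R x)
      = complex_of_real (Re (cinner (S (R x)) (R x)) / k - Im (cinner (Dr x) (R x)))"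
    using S_real[of "R x"] D2_pair[OF xD] by (simp add: cinner_diff_left cinner_scaleC_left)
  have "\<bar>Re (cinner (S (R x)) (R x)) / k - Im (cinner (Dr x) (R x))\<bar> \<le> norm ?B * norm (R x)"
    using cinner_cauchy_schwarz[of ?B "R x"] unfolding eq norm_of_real .
  then have "\<bar>Re (cinner (S (R x)) (R x)) / k - Im (cinner (Dr x) (R x))\<bar>^2
      \<le> (norm ?B * norm (R x))^2"
    by (rule power_mono) simp
  then show ?thesis by (simp add: power_mult_distrib)
qed

text \<open>Conjugating the pencil by T^(-1/2) gives a bounded operator on H.\<close>
definition pencil_conj :: "complex \<Rightarrow> 'h \<Rightarrow> 'h" where
  "pencil_conj z y = pencil_rep DR R S Dr z (rinv DR R y)"

lemma pencil_conj_eq: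
  "pencil_conj z y = scaleC (z^2) (rinv DR R (rinv DR R y)) + scaleC z (Dp y) + (y + scaleC \<i> (S y))"
  unfolding pencil_conj_def pencil_rep_def by (simp add: R_rinv Dprime_def)

lemma pencil_conj_clinear: "clinear_on UNIV (pencil_conj z)"
  unfolding clinear_on_UNIV_iff pencil_conj_eq
  using Dp_clinear
  by (simp add: clinear_on_UNIV_iff rinv_add rinv_scale S_lin S_hom scaleC_add_right
      scaleC_scaleC mult.commute algebra_simps)

lemma pencil_conj_bound: "norm (pencil_conj z y)
    \<le> (cmod z ^ 2 * (1 / sqrt a0) * (1 / sqrt a0) + cmod z * normD + 1 + normS) * norm y"
proof -
  have r2: "norm (rinv DR R (rinv DR R y)) \<le> (1 / sqrt a0) * (1 / sqrt a0) * norm y"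
    using rinv_bound[of "rinv DR R y"] mult_left_mono[OF rinv_bound[of y], of "1 / sqrt a0"] a0_pos
    by simp
  have "norm (pencil_conj z y) \<le> norm (scaleC (z^2) (rinv DR R (rinv DR R y)))
      + norm (scaleC z (Dp y)) + (norm y + norm (scaleC \<i> (S y)))"
    unfolding pencil_conj_eq by (meson add_mono norm_triangle_ineq order_trans)
  also have "\<dots> = cmod z ^ 2 * norm (rinv DR R (rinv DR R y)) + cmod z * norm (Dp y)
      + (norm y + norm (S y))"
    by (simp add: norm_scaleC norm_power)
  also have "\<dots> \<le> cmod z ^ 2 * ((1 / sqrt a0) * (1 / sqrt a0) * norm y) + cmod z * (normD * norm y)
      + (norm y + normS * norm y)"
    using r2 Dp_bound normS(2) by (intro add_mono mult_left_mono) auto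
  finally show ?thesis by (simp add: algebra_simps)
qed

text \<open>This is Lax--Milgram applied to the conjugated pencil.\<close>
lemma resolvent_from_coercive:
  assumes c: "c > 0"
    and co: "\<forall>x\<in>DR. c * (norm (R x))^2 \<le> Re (\<zeta> * cinner (pencil_rep DR R S Dr z x) (R x))"
  shows "z \<in> pencil_resolvent DR R S Dr"
proof -
  have "c * (norm y)^2 \<le> Re (\<zeta> * cinner (pencil_conj z y) y)" for y
    using co[rule_format, OF rinv_mem[of y]] unfolding pencil_conj_def R_rinv .
  then obtain Gi where lin: "clinear_on UNIV Gi" and G_Gi: "\<And>w. pencil_conj z (Gi w) = w"
    and Gi_G: "\<And>y. Gi (pencil_conj z y) = y" and bd: "\<And>w. c * norm (Gi w) \<le> cmod \<zeta> * norm w"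
    using coercive_operator_inverse[OF pencil_conj_clinear pencil_conj_bound c] by blast
  define M where "M w = rinv DR R (Gi w)" for w
  show ?thesis
    unfolding pencil_resolvent_def
  proof (intro CollectI exI[of _ M] conjI allI ballI)
    show "M w \<in> DR" for w by (simp add: M_def rinv_mem)
    show "clinear_on UNIV M"
      using lin by (simp add: clinear_on_UNIV_iff M_def rinv_add rinv_scale)
    show "\<exists>C. \<forall>w. norm (R (M w)) \<le> C * norm w"
      using bd c by (intro exI[of _ "cmod \<zeta> / c"]) (simp add: M_def R_rinv field_simps)
    show "pencil_rep DR R S Dr z (M w) = w" for w
      using G_Gi[of w] by (simp add: pencil_conj_def M_def)
    show "M (pencil_rep DR R S Dr z x) = x" if "x \<in> DR" for x
      using Gi_G[of "R x"] that by (simp add: pencil_conj_def M_def rinv_R)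
  qed
qed

lemma trivial_resolvent:
  assumes "\<forall>x\<in>DR. x = 0"
  shows "z \<in> pencil_resolvent DR R S Dr"
  by (rule resolvent_from_coercive[where c=1 and \<zeta>=1]) (use assms clin_f0[OF R_lin] in auto)

lemma omega2_bound:
  assumes k: "k > 0" and xD: "x \<in> DR" and x0: "x \<noteq> 0"
  shows "(norm (R x))^2 + k * Re (cinner (Dr x) (R x)) + k^2 * (norm x)^2
    \<le> omega2 DR R Dr k * (norm (R x))^2"
proof -
  have "(norm (R x))^2 + k * Re (cinner (D1rep DR R Dr x) (R x)) + k^2 * (norm x)^2
      \<le> omega2 DR R Dr k * (norm (R x))^2"
    unfolding omega2_def
  proof (rule le_Sup_quotient[where K="1 + k * normD + k^2 / a0"])
    show "x \<in> DR \<and> x \<noteq> 0" using xD x0 by simp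
    show "0 < (norm (R y))^2" if "y \<in> DR \<and> y \<noteq> 0" for y using that norm1_pos by blast
    show "(norm (R y))^2 + k * Re (cinner (D1rep DR R Dr y) (R y)) + k^2 * (norm y)^2
        \<le> (1 + k * normD + k^2 / a0) * (norm (R y))^2" if "y \<in> DR \<and> y \<noteq> 0" for y
    proof -
      have yD: "y \<in> DR" using that by simp
      have "Re (cinner (Dr y) (R y)) \<le> normD * (norm (R y))^2"
        using Re_cinner_le[of "Dr y" "R y"] mult_right_mono[OF normD(2)[OF yD], of "norm (R y)"]
        by (simp add: power2_eq_square mult.assoc)
      then have "k * Re (cinner (Dr y) (R y)) \<le> k * (normD * (norm (R y))^2)" using k by simp
      moreover have "k^2 * (norm y)^2 \<le> k^2 * ((norm (R y))^2 / a0)"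
        using R_lower[OF yD] a0_pos by (intro mult_left_mono) (auto simp: field_simps)
      ultimately show ?thesis
        using D1_pair[OF yD] by (simp add: algebra_simps)
    qed
  qed
  then show ?thesis using D1_pair[OF xD] by simp
qed

lemma omega2_ge_one:
  assumes k: "k > 0" and x0: "x0 \<in> DR" "x0 \<noteq> 0"
    and d1nn: "\<And>x. x \<in> DR \<Longrightarrow> 0 \<le> Re (cinner (Dr x) (R x))"
  shows "omega2 DR R Dr k \<ge> 1"
proof -
  have "0 \<le> k * Re (cinner (Dr x0) (R x0)) + k^2 * (norm x0)^2" using d1nn[OF x0(1)] k by simp
  then have "1 * (norm (R x0))^2 \<le> omega2 DR R Dr k * (norm (R x0))^2"
    using omega2_bound[OF k x0] by linarith
  then show ?thesis using norm1_pos[OF x0] by (simp add: mult_le_cancel_right)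
qed

text \<open>Common core of Theorems 1 and 2: if Re (D x, x) \<ge> 0, the cross term of the
expansion is absorbed up to m k |x|_1^2 (m \<le> 1), and Re z > -k (1 - m) / omega2, then
z lies in the resolvent set; take zeta = conj (z + k) in the coercivity criterion.\<close>
lemma resolvent_criterion:
  assumes k: "k > 0" and m: "0 \<le> m" "m \<le> 1"
    and d1nn: "\<And>x. x \<in> DR \<Longrightarrow> 0 \<le> Re (cinner (Dr x) (R x))"
    and cross: "\<And>x. x \<in> DR \<Longrightarrow> x \<noteq> 0 \<Longrightarrow>
        \<bar>Im z * (Re (cinner (S (R x)) (R x)) - k * Im (cinner (Dr x) (R x)))\<bar>
        \<le> (Re (cinner (Dr x) (R x)) - k * (norm x)^2 + Re z * (norm x)^2) * (Im z)^2
           + m * k * (norm (R x))^2"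
    and z: "Re z > - k * ((1 - m) / omega2 DR R Dr k)"
  shows "z \<in> pencil_resolvent DR R S Dr"
proof (cases "\<forall>x\<in>DR. x = 0")
  case True then show ?thesis by (rule trivial_resolvent)
next
  case False
  then obtain x0 where x0: "x0 \<in> DR" "x0 \<noteq> 0" by blast
  obtain c where c: "c > 0" and lower: "\<forall>X Y d1 t b. X \<ge> 0 \<longrightarrow> Y \<ge> 0 \<longrightarrow> d1 \<ge> 0
      \<longrightarrow> Y + k * d1 + k^2 * X \<le> omega2 DR R Dr k * Y
      \<longrightarrow> \<bar>t\<bar> \<le> (d1 - k * X + Re z * X) * b^2 + m * k * Y
      \<longrightarrow> c * Y \<le> (d1 - k * X + Re z * X) * b^2 + t
                  + ((Re z)^2 * (Re z * X + k * X + d1) + k * Re z * d1 + (Re z + k) * Y)"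
    using pencil_form_coercivity[OF k m omega2_ge_one[OF k x0 d1nn] z] by blast
  show ?thesis
  proof (rule resolvent_from_coercive[where c=c and \<zeta>="cnj (z + complex_of_real k)"])
    show "\<forall>x\<in>DR. c * (norm (R x))^2
        \<le> Re (cnj (z + complex_of_real k) * cinner (pencil_rep DR R S Dr z x) (R x))"
    proof
      fix x assume xD: "x \<in> DR"
      show "c * (norm (R x))^2
          \<le> Re (cnj (z + complex_of_real k) * cinner (pencil_rep DR R S Dr z x) (R x))"
      proof (cases "x = 0")
        case True
        then show ?thesis using clin_f0[OF R_lin] by simp
      next
        case False
        show ?thesis
          unfolding pencil_form_expansion[OF xD]
          using lower omega2_bound[OF k xD False] d1nn[OF xD] cross[OF xD False] by simp
      qed
    qed
  qed (rule c)
qed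

lemma omega1_lower:
  assumes om: "omega1 DR R S Dr k m \<ge> 0" and xD: "x \<in> DR" and x0: "x \<noteq> 0"
  shows "real_of_ereal (omega1 DR R S Dr k m) * (norm x)^2
    \<le> Re (cinner (Dr x) (R x)) / k - (norm x)^2
       - (norm (scaleC (complex_of_real (1/k)) (S (R x)) - D2rep DR R Dr x))^2 / (4 * m)"
proof -
  have "real_of_ereal (omega1 DR R S Dr k m)
      \<le> (Re (cinner (D1rep DR R Dr x) (R x)) / k - (norm x)^2
          - (norm (scaleC (complex_of_real (1/k)) (S (R x)) - D2rep DR R Dr x))^2 / (4 * m))
        / (norm x)^2"
    unfolding omega1_def
    by (rule real_of_ereal_INF_le) (use om[unfolded omega1_def] xD x0 in auto)
  then show ?thesis using x0 D1_pair[OF xD] by (simp add: field_simps)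
qed

lemma delta_D_lower:
  assumes dl: "delta_D DR R Dr > 0" and xD: "x \<in> DR"
  shows "real_of_ereal (delta_D DR R Dr) * (norm (R x))^2 \<le> Re (cinner (Dr x) (R x))"
proof (cases "x = 0")
  case True then show ?thesis using clin_f0[OF R_lin] by simp
next
  case False
  have "real_of_ereal (delta_D DR R Dr) \<le> Re (cinner (Dr x) (R x)) / (norm (R x))^2"
    unfolding delta_D_def by (rule real_of_ereal_INF_le) (use dl[unfolded delta_D_def] xD False in auto)
  then show ?thesis using norm1_pos[OF xD False] by (simp add: field_simps)
qed

lemma Stilde_pair_bound:
  assumes xD: "x \<in> DR" and x0: "x \<noteq> 0"
  shows "\<bar>Re (cinner (S (R x)) (R x))\<bar> \<le> norm_Stilde DR R S * (norm (R x))^2"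
proof -
  have NSb: "norm (S (R x)) \<le> norm_Stilde DR R S * norm (R x)"
    unfolding norm_Stilde_def by (rule le_Sup_quotient) (use xD x0 norm1_pos normS in auto)
  have "\<bar>Re (cinner (S (R x)) (R x))\<bar> \<le> cmod (cinner (S (R x)) (R x))" by (rule abs_Re_le_cmod)
  also have "\<dots> \<le> norm (S (R x)) * norm (R x)" by (rule cinner_cauchy_schwarz)
  also have "\<dots> \<le> norm_Stilde DR R S * norm (R x) * norm (R x)" using NSb by (rule mult_right_mono) simp
  finally show ?thesis by (simp add: power2_eq_square mult.assoc)
qed

lemma D2_pair_bound:
  assumes xD: "x \<in> DR" and x0: "x \<noteq> 0"
  shows "\<bar>Im (cinner (Dr x) (R x))\<bar> \<le> norm_D2 DR R Dr * (norm (R x))^2"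
proof -
  have NDb: "norm (D2rep DR R Dr x) \<le> norm_D2 DR R Dr * norm (R x)"
    unfolding norm_D2_def by (rule le_Sup_quotient) (use xD x0 norm1_pos D2_bound in auto)
  have "\<bar>Im (cinner (Dr x) (R x))\<bar> = cmod (cinner (D2rep DR R Dr x) (R x))"
    using D2_pair[OF xD] by simp
  also have "\<dots> \<le> norm (D2rep DR R Dr x) * norm (R x)" by (rule cinner_cauchy_schwarz)
  also have "\<dots> \<le> norm_D2 DR R Dr * norm (R x) * norm (R x)" using NDb by (rule mult_right_mono) simp
  finally show ?thesis by (simp add: power2_eq_square mult.assoc)
qed

lemma resolvent_thm1:
  assumes k: "k > 0" and m: "0 < m" "m \<le> 1" and om: "omega1 DR R S Dr k m \<ge> 0"
    and z: "Re z > - k * min (real_of_ereal (omega1 DR R S Dr k m) / 2)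
                               ((1 - m) / omega2 DR R Dr k)"
  shows "z \<in> pencil_resolvent DR R S Dr"
proof -
  define w1 where "w1 = real_of_ereal (omega1 DR R S Dr k m)"
  have w10: "w1 \<ge> 0" using om unfolding w1_def by (rule real_of_ereal_pos)
  note w1x = omega1_lower[OF om, folded w1_def]
  have d1nn: "0 \<le> Re (cinner (Dr x) (R x))" if xD: "x \<in> DR" for x
  proof (cases "x = 0")
    case True then show ?thesis using clin_f0[OF R_lin] by simp
  next
    case False
    have "0 \<le> w1 * (norm x)^2" using w10 by simp
    then have "0 \<le> Re (cinner (Dr x) (R x)) / k"
      using w1x[OF xD False] m zero_le_power2[of "norm x"] by (smt (verit) divide_nonneg_pos zero_le_power2)
    then show ?thesis using k by (simp add: zero_le_divide_iff)
  qed
  have "k * min (w1 / 2) ((1 - m) / omega2 DR R Dr k) \<le> k * w1"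
    using k w10 by (simp add: min_le_iff_disj)
  then have aw1: "Re z \<ge> - k * w1" using z unfolding w1_def by linarith
  show ?thesis
  proof (rule resolvent_criterion[OF k _ m(2) d1nn])
    show "0 \<le> m" using m by simp
    have "k * min (w1 / 2) ((1 - m) / omega2 DR R Dr k) \<le> k * ((1 - m) / omega2 DR R Dr k)"
      using k by (intro mult_left_mono) auto
    then show "Re z > - k * ((1 - m) / omega2 DR R Dr k)" using z unfolding w1_def by linarith
    fix x assume xD: "x \<in> DR" and x0: "x \<noteq> 0"
    show "\<bar>Im z * (Re (cinner (S (R x)) (R x)) - k * Im (cinner (Dr x) (R x)))\<bar>
        \<le> (Re (cinner (Dr x) (R x)) - k * (norm x)^2 + Re z * (norm x)^2) * (Im z)^2
           + m * k * (norm (R x))^2"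
      by (rule cross_term_bound_omega1[OF k m(1) _ _ Stilde_D2_cauchy_schwarz[OF xD k]
            w1x[OF xD x0] aw1]) simp_all
  qed
qed

lemma resolvent_thm2:
  assumes k: "k > 0" and p: "0 < p" and q: "0 < q" and pq: "p + q \<le> 1"
    and dl: "delta_D DR R Dr > 0"
    and W: "a0 * (real_of_ereal (delta_D DR R Dr) / k - (norm_Stilde DR R S)^2 / (4 * p * k^2)
               - (norm_D2 DR R Dr)^2 / (4 * q)) \<ge> 1"
    and z: "Re z > - k * min ((a0 * (real_of_ereal (delta_D DR R Dr) / k
               - (norm_Stilde DR R S)^2 / (4 * p * k^2) - (norm_D2 DR R Dr)^2 / (4 * q)) - 1) / 2)
               ((1 - p - q) / omega2 DR R Dr k)"
  shows "z \<in> pencil_resolvent DR R S Dr"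
proof -
  define W' where "W' = a0 * (real_of_ereal (delta_D DR R Dr) / k
      - (norm_Stilde DR R S)^2 / (4 * p * k^2) - (norm_D2 DR R Dr)^2 / (4 * q))"
  have d1nn: "0 \<le> Re (cinner (Dr x) (R x))" if "x \<in> DR" for x
  proof -
    have "0 \<le> real_of_ereal (delta_D DR R Dr) * (norm (R x))^2"
      using dl by (simp add: real_of_ereal_pos)
    then show ?thesis using delta_D_lower[OF dl that] by linarith
  qed
  have z': "Re z > - k * min ((W' - 1) / 2) ((1 - (p + q)) / omega2 DR R Dr k)"
    using z unfolding W'_def by (simp add: diff_diff_eq)
  have "k * min ((W' - 1) / 2) ((1 - (p + q)) / omega2 DR R Dr k) \<le> k * (W' - 1)"
    using k W unfolding W'_def by (simp add: min_le_iff_disj)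
  then have aW: "Re z \<ge> - k * (W' - 1)" using z' by linarith
  show ?thesis
  proof (rule resolvent_criterion[OF k _ pq d1nn])
    show "0 \<le> p + q" using p q by simp
    have "k * min ((W' - 1) / 2) ((1 - (p + q)) / omega2 DR R Dr k)
        \<le> k * ((1 - (p + q)) / omega2 DR R Dr k)"
      using k by (intro mult_left_mono) auto
    then show "Re z > - k * ((1 - (p + q)) / omega2 DR R Dr k)" using z' by linarith
    fix x assume xD: "x \<in> DR" and x0: "x \<noteq> 0"
    show "\<bar>Im z * (Re (cinner (S (R x)) (R x)) - k * Im (cinner (Dr x) (R x)))\<bar>
        \<le> (Re (cinner (Dr x) (R x)) - k * (norm x)^2 + Re z * (norm x)^2) * (Im z)^2
           + (p + q) * k * (norm (R x))^2"
      by (rule cross_term_bound_omega1'[OF k p q _ _ a0_pos Stilde_pair_bound[OF xD x0]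
            D2_pair_bound[OF xD x0] delta_D_lower[OF dl xD] R_lower[OF xD] W aW[unfolded W'_def]])
        simp_all
  qed
qed

end

section \<open>The spectral enclosure\<close>

lemma pencil_spectrum_subset_halfplane:
  assumes "\<And>z. Re z > b \<Longrightarrow> z \<in> pencil_resolvent DR R S Dr"
  shows "pencil_spectrum DR R S Dr \<subseteq> {z. Re z \<le> b}"
proof
  fix z assume "z \<in> pencil_spectrum DR R S Dr"
  then have "z \<notin> pencil_resolvent DR R S Dr" by (simp add: pencil_spectrum_def)
  then show "z \<in> {z. Re z \<le> b}" using assms not_less by blast
qed

theorem mainTheorem7:
  fixes DA DT DR :: "'h::{complex_inner, complete_space} set"
    and A T R S Dr :: "'h \<Rightarrow> 'h"
    and a0 :: real
  assumes A_msect: "m_sectorial DA A"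
    and a0_pos: "a0 > 0"
    and A_coerc: "\<forall>x\<in>DA. a0 * (norm x)^2 \<le> Re (cinner (A x) x)"
    and T_sa: "selfadjoint_op DT T"
    and T_ge: "\<forall>x\<in>DT. a0 * (norm x)^2 \<le> Re (cinner (T x) x)"
    and R_sqrt: "is_op_sqrt DT T DR R"
    and S_sa: "bounded_selfadjoint S"
    and A_dom: "DA = {x \<in> DR. R x + scaleC \<i> (S (R x)) \<in> DR}"
    and A_eq: "\<forall>x\<in>DA. A x = R (R x + scaleC \<i> (S (R x)))"
    and D_bdd: "bounded_1_m1 DR R Dr"
  shows
    "(\<forall>k m. beta_D DR R Dr > 0 \<and> 0 < k \<and> ereal k < beta_D DR R Dr \<and> 0 < m \<and> m \<le> 1
        \<and> omega1 DR R S Dr k m \<ge> 0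
      \<longrightarrow> pencil_spectrum DR R S Dr \<subseteq>
          {z. Re z \<le> - k * min (real_of_ereal (omega1 DR R S Dr k m) / 2) ((1 - m) / omega2 DR R Dr k)})
   \<and> (\<forall>k p q. delta_D DR R Dr > 0 \<and> 0 < k \<and> ereal k < beta_D DR R Dr \<and> 0 < p \<and> 0 < q \<and> p + q \<le> 1
        \<and> a0 * (real_of_ereal (delta_D DR R Dr) / k - (norm_Stilde DR R S)^2 / (4 * p * k^2)
               - (norm_D2 DR R Dr)^2 / (4 * q)) \<ge> 1
      \<longrightarrow> pencil_spectrum DR R S Dr \<subseteq>
          {z. Re z \<le> - k * min ((a0 * (real_of_ereal (delta_D DR R Dr) / k - (norm_Stilde DR R S)^2 / (4 * p * k^2)
               - (norm_D2 DR R Dr)^2 / (4 * q)) - 1) / 2) ((1 - p - q) / omega2 DR R Dr k)})"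
proof -
  interpret pencil_setting DT DR T R S Dr a0
    using a0_pos T_sa T_ge R_sqrt S_sa D_bdd by unfold_locales
  show ?thesis
  proof (intro conjI allI impI pencil_spectrum_subset_halfplane)
    fix k m z
    assume "beta_D DR R Dr > 0 \<and> 0 < k \<and> ereal k < beta_D DR R Dr \<and> 0 < m \<and> m \<le> 1
        \<and> omega1 DR R S Dr k m \<ge> 0"
      and "Re z > - k * min (real_of_ereal (omega1 DR R S Dr k m) / 2) ((1 - m) / omega2 DR R Dr k)"
    then show "z \<in> pencil_resolvent DR R S Dr" by (intro resolvent_thm1) auto
  next
    fix k p q z
    assume "delta_D DR R Dr > 0 \<and> 0 < k \<and> ereal k < beta_D DR R Dr \<and> 0 < p \<and> 0 < q
        \<and> p + q \<le> 1 \<and> a0 * (real_of_ereal (delta_D DR R Dr) / k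
          - (norm_Stilde DR R S)^2 / (4 * p * k^2) - (norm_D2 DR R Dr)^2 / (4 * q)) \<ge> 1"
      and "Re z > - k * min ((a0 * (real_of_ereal (delta_D DR R Dr) / k
          - (norm_Stilde DR R S)^2 / (4 * p * k^2) - (norm_D2 DR R Dr)^2 / (4 * q)) - 1) / 2)
          ((1 - p - q) / omega2 DR R Dr k)"
    then show "z \<in> pencil_resolvent DR R S Dr" by (intro resolvent_thm2) auto
  qed
qed
end
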